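(* Let $\rho$ satisfy (A1) and let $a>0$, $b>0$ satisfy $a,b\notin\Lambda(L)$, $\rho_1<a<b^+-b$ and $(a,b)\cap\Lambda(L)\neq\emptyset$. Then there exist $\gamma_1,\gamma_2>0$ such that $$\langle(L-a-b)u,u\rangle\le-\gamma_1\|u\|_E^2\quad\forall u\in E_1\oplus E_2,\qquad \langle(L-a-b)u,u\rangle\ge\gamma_2\|u\|_E^2\quad\forall u\in E_3.$$
   Context: $T=2\pi p/q$ ($p,q$ coprime positive integers), $\Omega=(0,T)\times(0,\pi)$, $L^2(\Omega)$ weighted by $\rho$. (A1): $\rho\in H^2(0,\pi)$, $\rho>0$ on $[0,\pi]$, $\rho_0:=\operatorname{ess\,inf}\eta_\rho>0$ with $\eta_\rho=\frac12\rho''/\rho-\frac14(\rho'/\rho)^2$; $\rho_1=\frac2\pi\int_0^\pi\eta_\rho$. $L$ is the self-adjoint extension in $L^2(\Omega)$ of $\rho^{-1}(\rho\psi_{tt}-(\rho\psi_x)_x)$ (Dirichlet in $x$, $T$-periodic in $t$), with orthonormal eigenbasis $\phi_m(t)\varphi_n(x)$, $\phi_m=T^{-1/2}e^{i2m\pi t/T}$, $\varphi_n$ the Dirichlet eigenfunctions of $-(\rho\varphi')'=\lambda_n^2\rho\varphi$, eigenvalues $\lambda_{nm}=\lambda_n^2-(2m\pi/T)^2$, $\Lambda(L)=\{\lambda_{nm}\}$; $b^+=\min\{\lambda\in\Lambda(L):\lambda>b\}$. For $u\in L^2(\Omega)$ let $\alpha_{nm}=\int_\Omega u\varphi_n\bar\phi_m\rho$.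 $E=\{u:\|u\|_E^2=\sum|\lambda_{nm}-a||\alpha_{nm}|^2<\infty\}$; $\langle(L-a-b)u,u\rangle=\sum(\lambda_{nm}-a-b)|\alpha_{nm}|^2$. $E_1,E_2,E_3$ are the closed subspaces of $E$ spanned by the $\phi_m\varphi_n$ with $\lambda_{nm}<a$, $a<\lambda_{nm}<b$, $\lambda_{nm}>b$ respectively. *)

theory Defs
  imports "HOL-Analysis.Analysis"
begin

definition Tper :: "nat \<Rightarrow> nat \<Rightarrow> real" where
  "Tper p q = 2 * pi * real p / real q"

definition Omega :: "real \<Rightarrow> (real \<times> real) set" where
  "Omega T = {0<..<T} \<times> {0<..<pi}"

(* phi is a (nonzero, real) Dirichlet eigenfunction of  -(rho phi')' = mu rho phi  on [0,pi],
   mu = lambda^2 being the spectral parameter. *)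
definition sl_eigenfun :: "(real \<Rightarrow> real) \<Rightarrow> real \<Rightarrow> (real \<Rightarrow> real) \<Rightarrow> bool" where
  "sl_eigenfun rho mu phi \<longleftrightarrow>
     (\<exists>phi'. \<forall>x\<in>{0..pi}.
        (phi has_real_derivative phi' x) (at x within {0..pi}) \<and>
        ((\<lambda>y. rho y * phi' y) has_real_derivative (- mu * rho x * phi x)) (at x within {0..pi}))
     \<and> phi 0 = 0 \<and> phi pi = 0 \<and> (\<exists>x\<in>{0..pi}. phi x \<noteq> 0)"

definition sl_spec :: "(real \<Rightarrow> real) \<Rightarrow> real set" where
  "sl_spec rho = {mu. \<exists>phi. sl_eigenfun rho mu phi}"

(* lambda_n^2, n >= 1: the n-th smallest Dirichlet eigenvalue *)
definition sl_eig :: "(real \<Rightarrow> real) \<Rightarrow> nat \<Rightarrow> real" where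
  "sl_eig rho n = (THE mu. mu \<in> sl_spec rho \<and> finite {nu \<in> sl_spec rho. nu < mu}
                         \<and> card {nu \<in> sl_spec rho. nu < mu} = n - 1)"

definition sl_efun :: "(real \<Rightarrow> real) \<Rightarrow> nat \<Rightarrow> real \<Rightarrow> real" where
  "sl_efun rho n = (SOME phi. sl_eigenfun rho (sl_eig rho n) phi \<and>
                      integral {0..pi} (\<lambda>x. rho x * (phi x)\<^sup>2) = 1)"

definition tfun :: "real \<Rightarrow> int \<Rightarrow> real \<Rightarrow> complex" where
  "tfun T m t = complex_of_real (1 / sqrt T) * exp (\<i> * complex_of_real (2 * real_of_int m * pi * t / T))"

definition lam :: "(real \<Rightarrow> real) \<Rightarrow> real \<Rightarrow> nat \<Rightarrow> int \<Rightarrow> real" where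
  "lam rho T n m = sl_eig rho n - (2 * real_of_int m * pi / T)\<^sup>2"

definition specL :: "(real \<Rightarrow> real) \<Rightarrow> real \<Rightarrow> real set" where
  "specL rho T = {lam rho T n m | n m. n \<ge> 1}"

definition bplus :: "(real \<Rightarrow> real) \<Rightarrow> real \<Rightarrow> real \<Rightarrow> real" where
  "bplus rho T b = Inf {l \<in> specL rho T. l > b}"

definition Idx :: "(nat \<times> int) set" where
  "Idx = {1..} \<times> UNIV"

definition L2w :: "(real \<Rightarrow> real) \<Rightarrow> real \<Rightarrow> (real \<times> real \<Rightarrow> complex) set" where
  "L2w rho T = {u. (\<lambda>z. indicator (Omega T) z *\<^sub>R u z) \<in> borel_measurable lebesgue \<and>
                  set_integrable lebesgue (Omega T) (\<lambda>z. (cmod (u z))\<^sup>2 * rho (snd z))}"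

definition coef :: "(real \<Rightarrow> real) \<Rightarrow> real \<Rightarrow> (real \<times> real \<Rightarrow> complex) \<Rightarrow> nat \<Rightarrow> int \<Rightarrow> complex" where
  "coef rho T u n m = set_lebesgue_integral lebesgue (Omega T)
     (\<lambda>z. u z * complex_of_real (sl_efun rho n (snd z)) * cnj (tfun T m (fst z)) * complex_of_real (rho (snd z)))"

definition Enorm2 :: "(real \<Rightarrow> real) \<Rightarrow> real \<Rightarrow> real \<Rightarrow> (real \<times> real \<Rightarrow> complex) \<Rightarrow> real" where
  "Enorm2 rho T a u = (\<Sum>\<^sub>\<infinity>(n, m)\<in>Idx. \<bar>lam rho T n m - a\<bar> * (cmod (coef rho T u n m))\<^sup>2)"

definition Espace :: "(real \<Rightarrow> real) \<Rightarrow> real \<Rightarrow> real \<Rightarrow> (real \<times> real \<Rightarrow> complex) set" where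
  "Espace rho T a = {u \<in> L2w rho T.
     (\<lambda>(n, m). \<bar>lam rho T n m - a\<bar> * (cmod (coef rho T u n m))\<^sup>2) summable_on Idx}"

definition Lform :: "(real \<Rightarrow> real) \<Rightarrow> real \<Rightarrow> real \<Rightarrow> real \<Rightarrow> (real \<times> real \<Rightarrow> complex) \<Rightarrow> real" where
  "Lform rho T a b u = (\<Sum>\<^sub>\<infinity>(n, m)\<in>Idx. (lam rho T n m - a - b) * (cmod (coef rho T u n m))\<^sup>2)"

definition basis :: "(real \<Rightarrow> real) \<Rightarrow> real \<Rightarrow> nat \<Rightarrow> int \<Rightarrow> real \<times> real \<Rightarrow> complex" where
  "basis rho T n m z = tfun T m (fst z) * complex_of_real (sl_efun rho n (snd z))"

(* closed subspace of E (closure in the E-norm) spanned by the basis functions indexed by S *)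
definition Espan :: "(real \<Rightarrow> real) \<Rightarrow> real \<Rightarrow> real \<Rightarrow> (nat \<times> int) set \<Rightarrow> (real \<times> real \<Rightarrow> complex) set" where
  "Espan rho T a S = {u \<in> Espace rho T a. \<forall>\<epsilon>>0. \<exists>F c. finite F \<and> F \<subseteq> S \<and>
      Enorm2 rho T a (\<lambda>z. u z - (\<Sum>k\<in>F. c k * basis rho T (fst k) (snd k) z)) < \<epsilon>}"

definition E1 :: "(real \<Rightarrow> real) \<Rightarrow> real \<Rightarrow> real \<Rightarrow> (real \<times> real \<Rightarrow> complex) set" where
  "E1 rho T a = Espan rho T a {(n, m) \<in> Idx. lam rho T n m < a}"

definition E2 :: "(real \<Rightarrow> real) \<Rightarrow> real \<Rightarrow> real \<Rightarrow> real \<Rightarrow> (real \<times> real \<Rightarrow> complex) set" where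
  "E2 rho T a b = Espan rho T a {(n, m) \<in> Idx. a < lam rho T n m \<and> lam rho T n m < b}"

definition E3 :: "(real \<Rightarrow> real) \<Rightarrow> real \<Rightarrow> real \<Rightarrow> real \<Rightarrow> (real \<times> real \<Rightarrow> complex) set" where
  "E3 rho T a b = Espan rho T a {(n, m) \<in> Idx. lam rho T n m > b}"

definition Esum :: "('a \<Rightarrow> complex) set \<Rightarrow> ('a \<Rightarrow> complex) set \<Rightarrow> ('a \<Rightarrow> complex) set" where
  "Esum A B = {(\<lambda>z. u z + v z) | u v. u \<in> A \<and> v \<in> B}"

definition eta :: "(real \<Rightarrow> real) \<Rightarrow> (real \<Rightarrow> real) \<Rightarrow> (real \<Rightarrow> real) \<Rightarrow> real \<Rightarrow> real" where
  "eta rho rho' rho'' x = rho'' x / (2 * rho x) - (rho' x / rho x)\<^sup>2 / 4"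

end

theory Submission
  imports Defs "HOL-Complex_Analysis.Conformal_Mappings"
begin

text \<open>
  Both the form \<open>\<langle>(L - a - b) u, u\<rangle>\<close> and the E-norm are diagonal in the coefficients
  \<open>\<alpha>\<^sub>n\<^sub>m\<close>, so the estimates reduce to the scalar inequalities
  \<open>l - a - b \<le> - min 1 (a / b) \<bar>l - a\<bar>\<close> for \<open>l < a\<close> or \<open>a < l < b\<close>, and
  \<open>l - a - b \<ge> (b\<^sup>+ - a - b) / (b\<^sup>+ - a) \<bar>l - a\<bar>\<close> for \<open>l \<ge> b\<^sup>+\<close>.
  What has to be shown is that the coefficients of \<open>u \<in> E\<^sub>1 \<oplus> E\<^sub>2\<close> (resp. \<open>u \<in> E\<^sub>3\<close>) vanish
  off \<open>{\<lambda>\<^sub>n\<^sub>m < b}\<close> (resp. off \<open>{\<lambda>\<^sub>n\<^sub>m \<ge> b\<^sup>+}\<close>): a finite combination of basis functions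
  approximating \<open>u\<close> in the E-norm has the same coefficient \<open>\<alpha>\<^sub>n\<^sub>m\<close> as \<open>u\<close> at every index outside
  the spanning set, and \<open>|\<lambda>\<^sub>n\<^sub>m - a| > 0\<close> since \<open>a \<notin> \<Lambda>(L)\<close>. Summability of the form
  follows from Bessel's inequality.

  Both steps need the orthonormality of the \<open>\<phi>\<^sub>m \<phi>\<^sub>n\<close>, hence that \<open>\<lambda>\<^sub>n\<^sup>2\<close> really is the
  \<open>n\<close>-th Dirichlet eigenvalue; this is proved for every continuous positive weight \<open>\<rho>\<close>.
  The solution \<open>y(\<mu>, x)\<close> of \<open>-(\<rho> y')' = \<mu> \<rho> y\<close>, \<open>y(0) = 0\<close>, \<open>(\<rho> y')(0) = 1\<close> is a power
  series in \<open>\<mu>\<close>, so the spectrum \<open>{\<mu>. y(\<mu>, \<pi>) = 0}\<close> is the real zero set of a nonconstant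
  entire function and is finite below every bound; it is positive by a sign argument.
  It is infinite because the Pruefer angle, the argument of \<open>\<surd>\<mu> y + \<i> \<rho> y'\<close>, decreases
  in \<open>x\<close> at a rate between \<open>\<surd>\<mu> / K\<close> and \<open>\<surd>\<mu> K\<close>, where \<open>1/K \<le> \<rho> \<le> K\<close>.
\<close>

lemma has_real_derivative_nonneg_imp_le:
  fixes f f' :: "real \<Rightarrow> real"
  assumes xy: "c \<le> x" "x \<le> y" "y \<le> d"
    and der: "\<And>t. t \<in> {c..d} \<Longrightarrow> (f has_real_derivative f' t) (at t within {c..d})"
    and nonneg: "\<And>t. t \<in> {c..d} \<Longrightarrow> f' t \<ge> 0"
  shows "f x \<le> f y"
proof (rule DERIV_nonneg_imp_increasing_open[OF xy(2)])
  fix t assume t: "x < t" "t < y"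
  then have "at t within {c..d} = at t"
    using xy by (intro at_within_interior) auto
  then show "\<exists>D. (f has_real_derivative D) (at t) \<and> 0 \<le> D"
    using der[of t] nonneg[of t] t xy by auto
next
  have "continuous_on {c..d} f"
    using der by (meson DERIV_continuous continuous_on_eq_continuous_within)
  then show "continuous_on {x..y} f"
    by (rule continuous_on_subset) (use xy in auto)
qed

lemma gronwall_vanishing:
  fixes V V' :: "real \<Rightarrow> real"
  assumes der: "\<And>t. t \<in> {c..d} \<Longrightarrow> (V has_real_derivative V' t) (at t within {c..d})"
    and growth: "\<And>t. t \<in> {c..d} \<Longrightarrow> \<bar>V' t\<bar> \<le> C * V t"
    and nonneg: "\<And>t. V t \<ge> 0"
    and x0: "x0 \<in> {c..d}" "V x0 = 0" and x: "x \<in> {c..d}"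
  shows "V x = 0"
proof -
  have "V x \<le> 0"
  proof (cases "x0 \<le> x")
    case True
    have "- (V x0 * exp (- C * x0)) \<le> - (V x * exp (- C * x))"
    proof (rule has_real_derivative_nonneg_imp_le[where f="\<lambda>t. - (V t * exp (- C * t))"
          and f'="\<lambda>t. (C * V t - V' t) * exp (- C * t)"])
      fix t assume t: "t \<in> {c..d}"
      show "((\<lambda>t. - (V t * exp (- C * t))) has_real_derivative (C * V t - V' t) * exp (- C * t))
          (at t within {c..d})"
        using der[OF t] by (auto intro!: derivative_eq_intros simp: algebra_simps)
      show "0 \<le> (C * V t - V' t) * exp (- C * t)"
        using growth[OF t] by (intro mult_nonneg_nonneg) auto
    qed (use True x x0 in auto)
    then show ?thesis using x0 by (simp add: mult_le_0_iff)
  next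
    case False
    have "V x * exp (C * x) \<le> V x0 * exp (C * x0)"
    proof (rule has_real_derivative_nonneg_imp_le[where f="\<lambda>t. V t * exp (C * t)"
          and f'="\<lambda>t. (V' t + C * V t) * exp (C * t)"])
      fix t assume t: "t \<in> {c..d}"
      show "((\<lambda>t. V t * exp (C * t)) has_real_derivative (V' t + C * V t) * exp (C * t))
          (at t within {c..d})"
        using der[OF t] by (auto intro!: derivative_eq_intros simp: algebra_simps)
      show "0 \<le> (V' t + C * V t) * exp (C * t)"
        using growth[OF t] by (intro mult_nonneg_nonneg) auto
    qed (use False x x0 in auto)
    then show ?thesis using x0 by (simp add: mult_le_0_iff)
  qed
  with nonneg[of x] show ?thesis by auto
qed

lemma has_vector_derivative_continuous_log:
  fixes h G :: "real \<Rightarrow> complex"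
  assumes x: "x \<in> S" and cont: "continuous (at x within S) G"
    and exp_G: "\<And>t. t \<in> S \<Longrightarrow> h t = exp (G t)"
    and der: "(h has_vector_derivative h') (at x within S)"
  shows "(G has_vector_derivative h' / h x) (at x within S)"
proof -
  have hx: "h x \<noteq> 0" using exp_G[OF x] by simp
  obtain d where d: "d > 0" "\<And>t. t \<in> S \<Longrightarrow> dist t x < d \<Longrightarrow> dist (G t) (G x) < 1"
    using cont unfolding continuous_within_eps_delta by (meson zero_less_one)
  \<comment> \<open>near \<open>x\<close>, \<open>G - G x\<close> has imaginary part in \<open>(-\<pi>, \<pi>]\<close>, so it is the principal \<open>Ln\<close> of \<open>h / h x\<close>\<close>
  have local_Ln: "G x + Ln (h t / h x) = G t" if t: "t \<in> S" "dist t x < d" for t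
  proof -
    define w where "w = G t - G x"
    have "norm w < 1" using d(2)[OF t] by (simp add: w_def dist_norm)
    then have "\<bar>Im w\<bar> < 1" using abs_Im_le_cmod[of w] by linarith
    then have "- pi < Im w" "Im w \<le> pi" using pi_gt3 by linarith+
    then have "Ln (exp w) = w" by (rule Ln_exp)
    moreover have "h t / h x = exp w" using exp_G[OF t(1)] exp_G[OF x] by (simp add: w_def exp_diff)
    ultimately show ?thesis by (simp add: w_def)
  qed
  have dq: "((\<lambda>t. h t / h x) has_vector_derivative h' / h x) (at x within S)"
    using has_vector_derivative_mult_left[OF der, of "inverse (h x)"]
    by (simp add: divide_inverse mult.commute)
  have "(Ln has_field_derivative inverse 1) (at ((\<lambda>t. h t / h x) x))"
    using hx has_field_derivative_Ln[of 1] by (simp add: nonpos_Reals_def)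
  then have "((Ln \<circ> (\<lambda>t. h t / h x)) has_vector_derivative (h' / h x) * inverse 1) (at x within S)"
    by (rule field_vector_diff_chain_within[OF dq has_field_derivative_at_within])
  then have "((\<lambda>t. G x + Ln (h t / h x)) has_vector_derivative h' / h x) (at x within S)"
    using has_vector_derivative_add[OF has_vector_derivative_const[of "G x"]] by (simp add: o_def)
  then show ?thesis
    by (rule has_vector_derivative_transform_within[OF _ d(1) x]) (use local_Ln in auto)
qed

lemma weighted_ratio_bounds:
  fixes P Q w K :: real
  assumes PQ: "P \<ge> 0" "Q \<ge> 0" "P + Q > 0" and w: "w > 0" "w \<le> K" "1 / w \<le> K"
  shows "1 / K \<le> (w * P + Q / w) / (P + Q)" "(w * P + Q / w) / (P + Q) \<le> K"
proof -
  have K0: "K > 0" using w by linarith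
  have "1 / K \<le> w" "1 / K \<le> 1 / w" using w K0 by (simp_all add: field_simps)
  then have "P / K \<le> w * P" "Q / K \<le> Q / w"
    using mult_right_mono[of "1 / K" w P] mult_right_mono[of "1 / K" "1 / w" Q] PQ by auto
  then have "(P + Q) / K \<le> w * P + Q / w" by (simp add: add_divide_distrib)
  then show "1 / K \<le> (w * P + Q / w) / (P + Q)" using PQ K0 by (simp add: field_simps)
  have "w * P \<le> K * P" "Q / w \<le> K * Q"
    using mult_right_mono[OF w(2) PQ(1)] mult_right_mono[OF w(3) PQ(2)] by auto
  then have "w * P + Q / w \<le> K * (P + Q)" by (simp add: distrib_left)
  then show "(w * P + Q / w) / (P + Q) \<le> K" using PQ by (simp add: field_simps)
qed

lemma cos_zeros_of_decrease:
  fixes \<Phi> :: "real \<Rightarrow> real"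
  assumes ab: "a \<le> b" and cont: "continuous_on {a..b} \<Phi>" and drop: "\<Phi> b + real N * pi \<le> \<Phi> a"
  shows "\<exists>A \<subseteq> {a..b}. finite A \<and> card A = N \<and> (\<forall>\<mu>\<in>A. cos (\<Phi> \<mu>) = 0)"
proof -
  define k0 where "k0 = \<lceil>(\<Phi> b - pi / 2) / pi\<rceil>"
  define v where "v i = pi / 2 + (real_of_int k0 + real i) * pi" for i :: nat
  have "(\<Phi> b - pi / 2) / pi \<le> real_of_int k0" "real_of_int k0 < (\<Phi> b - pi / 2) / pi + 1"
    unfolding k0_def by linarith+
  then have k0: "\<Phi> b \<le> pi / 2 + real_of_int k0 * pi" "pi / 2 + real_of_int k0 * pi < \<Phi> b + pi"
    by (simp_all add: field_simps)
  have v_range: "\<Phi> b \<le> v i \<and> v i \<le> \<Phi> a" if "i < N" for i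
  proof
    have "real (Suc i) * pi \<le> real N * pi"
      using that by (intro mult_right_mono) auto
    then have "real i * pi + pi \<le> real N * pi" by (simp add: distrib_right)
    moreover have "0 \<le> real i * pi" by simp
    ultimately show "\<Phi> b \<le> v i" "v i \<le> \<Phi> a"
      unfolding v_def distrib_right using k0 drop by linarith+
  qed
  have "\<forall>i. i < N \<longrightarrow> (\<exists>\<mu>. \<mu> \<in> {a..b} \<and> \<Phi> \<mu> = v i)"
  proof (intro allI impI)
    fix i assume "i < N"
    then show "\<exists>\<mu>. \<mu> \<in> {a..b} \<and> \<Phi> \<mu> = v i"
      using IVT2'[of \<Phi> b "v i" a, OF _ _ ab cont] v_range by auto
  qed
  then obtain \<mu> where \<mu>: "\<And>i. i < N \<Longrightarrow> \<mu> i \<in> {a..b} \<and> \<Phi> (\<mu> i) = v i" by metis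
  have "inj_on \<mu> {..<N}"
  proof (rule inj_onI)
    fix i j assume "i \<in> {..<N}" "j \<in> {..<N}" "\<mu> i = \<mu> j"
    then have "v i = v j" using \<mu> by (metis lessThan_iff)
    then show "i = j" by (simp add: v_def)
  qed
  moreover have "cos (v i) = 0" for i
    using sin_times_pi_eq_0[of "real_of_int k0 + real i"] by (simp add: v_def cos_add)
  ultimately show ?thesis
    using \<mu> by (intro exI[of _ "\<mu> ` {..<N}"]) (auto simp: card_image)
qed

lemma summable_power_div_fact_reindex:
  fixes A :: real
  assumes "A \<ge> 0" and "\<And>j. j \<le> k j"
  shows "summable (\<lambda>j. A ^ j / fact (k j))"
proof (rule summable_comparison_test'[OF summable_exp[of A]])
  fix j
  have "fact j \<le> (fact (k j) :: real)" by (intro fact_mono assms(2))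
  then have "A ^ j / fact (k j) \<le> A ^ j / fact j"
    using assms(1) by (intro divide_left_mono) auto
  then show "norm (A ^ j / fact (k j)) \<le> inverse (fact j) * A ^ j"
    using assms(1) by (simp add: divide_inverse mult.commute)
qed

lemma least_element_if_locally_finite:
  fixes S :: "'a::linorder set"
  assumes fin: "finite {x \<in> S. x \<le> s}" and s: "s \<in> S" "P s"
  shows "\<exists>\<mu>\<in>S. P \<mu> \<and> (\<forall>\<nu>\<in>S. P \<nu> \<longrightarrow> \<mu> \<le> \<nu>)"
proof -
  let ?F = "{\<nu> \<in> S. P \<nu> \<and> \<nu> \<le> s}"
  have F: "finite ?F" "?F \<noteq> {}"
    using s by (auto intro: finite_subset[OF _ fin])
  then have "Min ?F \<in> ?F" by (rule Min_in)
  moreover have "Min ?F \<le> \<nu>" if "\<nu> \<in> S" "P \<nu>" for \<nu>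
  proof (cases "\<nu> \<le> s")
    case True
    then show ?thesis using F that by (intro Min_le) auto
  next
    case False
    have "Min ?F \<le> s" using F s by (intro Min_le) auto
    then show ?thesis using False by simp
  qed
  ultimately show ?thesis by blast
qed

lemma ex1_rank_element:
  fixes S :: "'a::linorder set"
  assumes inf: "infinite S" and fin: "\<And>M. finite {x \<in> S. x \<le> M}"
  shows "\<exists>!\<mu>. \<mu> \<in> S \<and> finite {\<nu> \<in> S. \<nu> < \<mu>} \<and> card {\<nu> \<in> S. \<nu> < \<mu>} = m"
proof -
  have fin_less: "finite {\<nu> \<in> S. \<nu> < \<mu>}" for \<mu>
    by (rule finite_subset[OF _ fin[of \<mu>]]) auto
  have "\<exists>\<mu>\<in>S. card {\<nu> \<in> S. \<nu> < \<mu>} = m"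
  proof (induction m)
    case 0
    obtain s where "s \<in> S" using inf by (metis finite.emptyI ex_in_conv)
    then obtain \<mu> where "\<mu> \<in> S" "\<forall>\<nu>\<in>S. \<mu> \<le> \<nu>"
      using least_element_if_locally_finite[OF fin, of s "\<lambda>_. True"] by blast
    then have "\<mu> \<in> S" "{\<nu> \<in> S. \<nu> < \<mu>} = {}" by (auto simp: not_less[symmetric])
    then show ?case by (metis card.empty)
  next
    case (Suc m)
    then obtain \<mu> where \<mu>: "\<mu> \<in> S" "card {\<nu> \<in> S. \<nu> < \<mu>} = m" by blast
    have "\<not> S \<subseteq> {\<nu> \<in> S. \<nu> \<le> \<mu>}" using inf fin finite_subset by blast
    then obtain \<nu>0 where "\<nu>0 \<in> S" "\<not> \<nu>0 \<le> \<mu>" by blast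
    then have "\<nu>0 \<in> S" "\<mu> < \<nu>0" by (simp_all add: not_le)
    then obtain \<mu>' where \<mu>': "\<mu>' \<in> S" "\<mu> < \<mu>'" "\<forall>\<nu>\<in>S. \<mu> < \<nu> \<longrightarrow> \<mu>' \<le> \<nu>"
      using least_element_if_locally_finite[OF fin, of \<nu>0 "\<lambda>\<nu>. \<mu> < \<nu>"] by blast
    then have "{\<nu> \<in> S. \<nu> < \<mu>'} = insert \<mu> {\<nu> \<in> S. \<nu> < \<mu>}"
      using \<mu>(1) by force
    then have "card {\<nu> \<in> S. \<nu> < \<mu>'} = Suc m"
      using fin_less[of \<mu>] \<mu>(2) by simp
    then show ?case using \<mu>'(1) by blast
  qed
  moreover have "\<mu>1 = \<mu>2"
    if "\<mu>1 \<in> S" "\<mu>2 \<in> S" "card {\<nu> \<in> S. \<nu> < \<mu>1} = card {\<nu> \<in> S. \<nu> < \<mu>2}" for \<mu>1 \<mu>2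
  proof -
    have strict: "card {\<nu> \<in> S. \<nu> < x} < card {\<nu> \<in> S. \<nu> < y}" if "x \<in> S" "x < y" for x y
      by (rule psubset_card_mono[OF fin_less]) (use that in auto)
    show ?thesis
      using strict[of \<mu>1 \<mu>2] strict[of \<mu>2 \<mu>1] that
      by (cases "\<mu>1 < \<mu>2") (auto simp: not_less_iff_gr_or_eq)
  qed
  ultimately show ?thesis using fin_less by blast
qed

lemma set_integral_sum:
  fixes f :: "'i \<Rightarrow> 'a \<Rightarrow> 'b::{banach, second_countable_topology}"
  assumes "finite I" "\<And>i. i \<in> I \<Longrightarrow> set_integrable M A (f i)"
  shows "set_integrable M A (\<lambda>x. \<Sum>i\<in>I. f i x)"
    and "(LINT x:A|M. (\<Sum>i\<in>I. f i x)) = (\<Sum>i\<in>I. LINT x:A|M. f i x)"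
proof -
  have "set_integrable M A (\<lambda>x. \<Sum>i\<in>I. f i x) \<and>
      (LINT x:A|M. (\<Sum>i\<in>I. f i x)) = (\<Sum>i\<in>I. LINT x:A|M. f i x)"
    using assms
  proof (induction I rule: finite_induct)
    case empty
    show ?case by (simp add: set_integrable_def set_lebesgue_integral_def)
  next
    case (insert i I)
    then show ?case using set_integral_add[of M A "f i"] by simp
  qed
  then show "set_integrable M A (\<lambda>x. \<Sum>i\<in>I. f i x)"
    and "(LINT x:A|M. (\<Sum>i\<in>I. f i x)) = (\<Sum>i\<in>I. LINT x:A|M. f i x)" by auto
qed

lemma set_integrable_Re:
  "set_integrable M A f \<Longrightarrow> set_integrable M A (\<lambda>x. Re (f x))"
  unfolding set_integrable_def by (drule integrable_Re) simp

lemma set_integral_Re: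
  assumes "set_integrable M A f"
  shows "(LINT x:A|M. Re (f x)) = Re (LINT x:A|M. f x)"
  using integral_bounded_linear[OF bounded_linear_Re assms[unfolded set_integrable_def]]
  by (simp add: set_lebesgue_integral_def)

lemma summable_on_eq_off_finite:
  fixes f g :: "'a \<Rightarrow> real"
  assumes "f summable_on A" "finite F" "\<And>x. x \<in> A - F \<Longrightarrow> g x = f x"
  shows "g summable_on A"
proof -
  have "g summable_on (A - F)"
    using summable_on_cofin_subset[OF assms(1,2)] summable_on_cong assms(3) by blast
  moreover have "g summable_on (A \<inter> F)" using assms(2) by simp
  ultimately have "g summable_on ((A - F) \<union> (A \<inter> F))" by (rule summable_on_Un_disjoint) auto
  then show ?thesis by (simp add: Un_Diff_Int)
qed

lemma cmod_add_squared_le: "(cmod (x + y))\<^sup>2 \<le> 2 * (cmod x)\<^sup>2 + 2 * (cmod y)\<^sup>2"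
proof -
  have "(cmod (x + y))\<^sup>2 \<le> (cmod x + cmod y)\<^sup>2"
    by (intro power_mono norm_triangle_ineq) auto
  also have "\<dots> \<le> 2 * (cmod x)\<^sup>2 + 2 * (cmod y)\<^sup>2"
    using sum_squares_bound[of "cmod x" "cmod y"] by (simp add: power2_sum)
  finally show ?thesis .
qed

section \<open>Diagonal quadratic forms\<close>

lemma shifted_value_le_neg:
  fixes a b l :: real
  assumes a: "a > 0" and b: "b > 0" and l: "l < a \<or> (a < l \<and> l < b)"
  shows "l - a - b \<le> - min 1 (a / b) * \<bar>l - a\<bar>"
proof (cases "l < a")
  case True
  have "min 1 (a / b) * \<bar>l - a\<bar> \<le> a - l"
    using True mult_right_mono[of "min 1 (a / b)" 1 "\<bar>l - a\<bar>"] by auto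
  then show ?thesis using b by linarith
next
  case False
  then have la: "a < l" "l < b" using l by auto
  have "(1 + min 1 (a / b)) * (l - a) \<le> (1 + a / b) * (b - a)"
    using la a b by (intro mult_mono) auto
  also have "\<dots> = b - a * a / b" using b by (simp add: field_simps)
  also have "\<dots> \<le> b" using a b by simp
  finally show ?thesis using la by (simp add: algebra_simps)
qed

lemma shifted_value_ge_pos:
  fixes a b l \<beta> :: real
  assumes b: "b > 0" and gap: "a < \<beta> - b" and l: "\<beta> \<le> l"
  shows "(\<beta> - a - b) / (\<beta> - a) * \<bar>l - a\<bar> \<le> l - a - b"
proof -
  have "b * (\<beta> - a) \<le> b * (l - a)" using b l by (intro mult_left_mono) auto
  then have "(\<beta> - a - b) * (l - a) \<le> (l - a - b) * (\<beta> - a)" by (simp add: algebra_simps)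
  moreover have "\<bar>l - a\<bar> = l - a" "\<beta> - a > 0" using gap b l by auto
  ultimately show ?thesis by (simp add: divide_le_eq mult.commute)
qed

lemma infsum_shifted_form_le_neg:
  fixes l c :: "'i \<Rightarrow> real" and a b :: real
  assumes a: "a > 0" and b: "b > 0"
    and sum_E: "(\<lambda>i. \<bar>l i - a\<bar> * c i) summable_on I" and sum_c: "c summable_on I"
    and c_nonneg: "\<And>i. i \<in> I \<Longrightarrow> c i \<ge> 0"
    and support: "\<And>i. i \<in> I \<Longrightarrow> c i \<noteq> 0 \<Longrightarrow> l i < a \<or> (a < l i \<and> l i < b)"
  shows "(\<Sum>\<^sub>\<infinity>i\<in>I. (l i - a - b) * c i) \<le> - min 1 (a / b) * (\<Sum>\<^sub>\<infinity>i\<in>I. \<bar>l i - a\<bar> * c i)"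
proof -
  have bound_summable: "(\<lambda>i. \<bar>l i - a\<bar> * c i + b * c i) summable_on I"
    by (intro summable_on_add summable_on_cmult_right sum_E sum_c)
  have norm_bound: "norm ((l i - a - b) * c i) \<le> \<bar>l i - a\<bar> * c i + b * c i" if "i \<in> I" for i
  proof -
    have "norm ((l i - a - b) * c i) = \<bar>l i - a - b\<bar> * c i"
      using c_nonneg[OF that] by (simp add: abs_mult)
    also have "\<dots> \<le> (\<bar>l i - a\<bar> + b) * c i"
      using c_nonneg[OF that] b by (intro mult_right_mono) auto
    finally show ?thesis by (simp add: distrib_right)
  qed
  have sum_L: "(\<lambda>i. (l i - a - b) * c i) summable_on I"
    by (rule abs_summable_summable, rule summable_on_comparison_test[OF bound_summable])
      (use norm_bound in auto)
  have pointwise: "(l i - a - b) * c i \<le> - min 1 (a / b) * (\<bar>l i - a\<bar> * c i)" if "i \<in> I" for i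
  proof (cases "c i = 0")
    case False
    have "(l i - a - b) * c i \<le> (- min 1 (a / b) * \<bar>l i - a\<bar>) * c i"
      using shifted_value_le_neg[OF a b support[OF that False]] c_nonneg[OF that]
      by (rule mult_right_mono)
    then show ?thesis by (simp only: mult.assoc)
  qed simp
  have "(\<Sum>\<^sub>\<infinity>i\<in>I. (l i - a - b) * c i) \<le> (\<Sum>\<^sub>\<infinity>i\<in>I. - min 1 (a / b) * (\<bar>l i - a\<bar> * c i))"
    by (intro infsum_mono sum_L summable_on_cmult_right sum_E) (rule pointwise)
  also have "\<dots> = - min 1 (a / b) * (\<Sum>\<^sub>\<infinity>i\<in>I. \<bar>l i - a\<bar> * c i)"
    by (rule infsum_cmult_right')
  finally show ?thesis .
qed

lemma infsum_shifted_form_ge_pos: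
  fixes l c :: "'i \<Rightarrow> real" and a b \<beta> :: real
  assumes b: "b > 0" and gap: "a < \<beta> - b"
    and sum_E: "(\<lambda>i. \<bar>l i - a\<bar> * c i) summable_on I"
    and c_nonneg: "\<And>i. i \<in> I \<Longrightarrow> c i \<ge> 0"
    and support: "\<And>i. i \<in> I \<Longrightarrow> c i \<noteq> 0 \<Longrightarrow> \<beta> \<le> l i"
  shows "(\<beta> - a - b) / (\<beta> - a) * (\<Sum>\<^sub>\<infinity>i\<in>I. \<bar>l i - a\<bar> * c i) \<le> (\<Sum>\<^sub>\<infinity>i\<in>I. (l i - a - b) * c i)"
proof -
  have bounds: "(\<beta> - a - b) / (\<beta> - a) * (\<bar>l i - a\<bar> * c i) \<le> (l i - a - b) * c i
      \<and> norm ((l i - a - b) * c i) \<le> \<bar>l i - a\<bar> * c i" if "i \<in> I" for i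
  proof (cases "c i = 0")
    case False
    then have l: "\<beta> \<le> l i" by (rule support[OF that])
    have "(\<beta> - a - b) / (\<beta> - a) * \<bar>l i - a\<bar> * c i \<le> (l i - a - b) * c i"
      by (rule mult_right_mono[OF shifted_value_ge_pos[OF b gap l] c_nonneg[OF that]])
    moreover have "\<bar>l i - a - b\<bar> \<le> \<bar>l i - a\<bar>" using l gap b by linarith
    then have "\<bar>l i - a - b\<bar> * c i \<le> \<bar>l i - a\<bar> * c i"
      by (rule mult_right_mono[OF _ c_nonneg[OF that]])
    moreover have "norm ((l i - a - b) * c i) = \<bar>l i - a - b\<bar> * c i"
      using c_nonneg[OF that] by (simp add: abs_mult)
    ultimately show ?thesis by (simp add: mult.assoc)
  qed simp
  have sum_L: "(\<lambda>i. (l i - a - b) * c i) summable_on I"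
    by (rule abs_summable_summable, rule summable_on_comparison_test[OF sum_E]) (use bounds in auto)
  have "(\<beta> - a - b) / (\<beta> - a) * (\<Sum>\<^sub>\<infinity>i\<in>I. \<bar>l i - a\<bar> * c i)
      = (\<Sum>\<^sub>\<infinity>i\<in>I. (\<beta> - a - b) / (\<beta> - a) * (\<bar>l i - a\<bar> * c i))"
    by (rule infsum_cmult_right'[symmetric])
  also have "\<dots> \<le> (\<Sum>\<^sub>\<infinity>i\<in>I. (l i - a - b) * c i)"
    by (intro infsum_mono summable_on_cmult_right sum_E sum_L) (use bounds in auto)
  finally show ?thesis .
qed

section \<open>Integrals over the rectangle\<close>

lemma Omega_eq_box: "Omega T = box (0,0) (T,pi)"
  unfolding Omega_def by (auto simp: box_def Basis_prod_def inner_prod_def)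

lemma Omega_subset_cbox: "Omega T \<subseteq> cbox (0,0) (T,pi)"
  unfolding Omega_def by (auto simp: cbox_def Basis_prod_def inner_prod_def)

lemma Omega_in_sets_lebesgue: "Omega T \<in> sets lebesgue"
  unfolding Omega_eq_box by simp

lemma measurable_Omega_continuous:
  fixes B :: "real \<times> real \<Rightarrow> complex"
  assumes "continuous_on (cbox (0,0) (T,pi)) B"
  shows "(\<lambda>z. indicator (Omega T) z *\<^sub>R B z) \<in> borel_measurable lebesgue"
proof -
  have "B \<in> borel_measurable (lebesgue_on (Omega T))"
    using continuous_on_subset[OF assms Omega_subset_cbox] Omega_in_sets_lebesgue
    by (rule continuous_imp_measurable_on_sets_lebesgue)
  then show ?thesis
    using borel_measurable_restrict_space_iff[of "Omega T" lebesgue B] Omega_in_sets_lebesgue by simp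
qed

lemma set_integrable_Omega_continuous:
  fixes B :: "real \<times> real \<Rightarrow> 'b::euclidean_space"
  assumes "continuous_on (cbox (0,0) (T,pi)) B"
  shows "set_integrable lebesgue (Omega T) B"
  using absolutely_integrable_continuous[OF assms]
  by (rule set_integrable_subset[OF _ Omega_in_sets_lebesgue Omega_subset_cbox])

lemma set_integral_Omega_continuous:
  fixes B :: "real \<times> real \<Rightarrow> 'b::euclidean_space"
  assumes "continuous_on (cbox (0,0) (T,pi)) B"
  shows "(LINT z:Omega T|lebesgue. B z) = integral (cbox (0,0) (T,pi)) B"
proof -
  have "(LINT z:Omega T|lebesgue. B z) = integral (Omega T) B"
    by (rule set_lebesgue_integral_eq_integral(2)[OF set_integrable_Omega_continuous[OF assms]])
  also have "\<dots> = integral (cbox (0,0) (T,pi)) B"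
    unfolding Omega_eq_box by (rule integral_open_interval)
  finally show ?thesis .
qed

lemma continuous_on_cbox_fst:
  "continuous_on {0..(T::real)} f \<Longrightarrow> continuous_on (cbox (0,0) (T,pi)) (\<lambda>z. f (fst z))"
  by (rule continuous_on_compose2[OF _ continuous_on_fst]) (auto simp: cbox_Pair_eq cbox_interval)

lemma continuous_on_cbox_snd:
  "continuous_on {0..pi} g \<Longrightarrow> continuous_on (cbox (0,0) (T::real,pi)) (\<lambda>z. g (snd z))"
  by (rule continuous_on_compose2[OF _ continuous_on_snd]) (auto simp: cbox_Pair_eq cbox_interval)

lemma integral_cbox_product:
  fixes f g :: "real \<Rightarrow> complex"
  assumes f: "continuous_on {0..T} f" and g: "continuous_on {0..pi} g"
  shows "integral (cbox (0,0) (T,pi)) (\<lambda>z. f (fst z) * g (snd z))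
    = integral {0..T} f * integral {0..pi} g"
proof -
  have "continuous_on (cbox (0,0) (T,pi)) (\<lambda>z. f (fst z) * g (snd z))"
    by (intro continuous_intros continuous_on_cbox_fst continuous_on_cbox_snd f g)
  from integral_prod_continuous[OF this]
  have "integral (cbox (0,0) (T,pi)) (\<lambda>z. f (fst z) * g (snd z))
      = integral (cbox 0 T) (\<lambda>t. integral (cbox 0 pi) (\<lambda>x. f t * g x))"
    by simp
  then show ?thesis by simp
qed

lemma continuous_on_tfun: "continuous_on S (tfun T m)"
  unfolding tfun_def divide_inverse by (intro continuous_intros)

lemma tfun_mult_cnj:
  assumes "T > 0"
  shows "tfun T m' t * cnj (tfun T m t) = exp (\<i> * of_real (2 * real_of_int (m' - m) * pi / T * t)) / T"
proof -
  have "of_real (1 / sqrt T) * of_real (1 / sqrt T) = (of_real (1 / T) :: complex)"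
    using assms by (simp flip: of_real_mult)
  moreover have "exp (\<i> * of_real (2 * real_of_int m' * pi * t / T))
      * exp (- (\<i> * of_real (2 * real_of_int m * pi * t / T)))
      = exp (\<i> * of_real (2 * real_of_int (m' - m) * pi / T * t))"
    by (simp flip: exp_add add: algebra_simps diff_divide_distrib)
  ultimately show ?thesis
    unfolding tfun_def by (simp add: exp_cnj divide_inverse mult_ac)
qed

lemma integral_tfun_mult_cnj:
  assumes T: "T > 0"
  shows "integral {0..T} (\<lambda>t. tfun T m' t * cnj (tfun T m t)) = (if m' = m then 1 else 0)"
proof -
  define k where "k = 2 * real_of_int (m' - m) * pi / T"
  have integrand: "(\<lambda>t. tfun T m' t * cnj (tfun T m t)) = (\<lambda>t. exp (\<i> * of_real (k * t)) / T)"
    using tfun_mult_cnj[OF T] by (simp add: k_def)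
  show ?thesis
  proof (cases "m' = m")
    case True
    then show ?thesis unfolding integrand using T by (simp add: k_def scaleR_conv_of_real)
  next
    case False
    then have k: "k \<noteq> 0" using T by (simp add: k_def)
    define F where "F t = exp (\<i> * of_real (k * t)) / (\<i> * of_real k * T)" for t
    have "(F has_vector_derivative exp (\<i> * of_real (k * t)) / T) (at t within {0..T})" for t
    proof -
      have "((\<lambda>t. \<i> * of_real (k * t)) has_vector_derivative \<i> * of_real k) (at t within {0..T})"
        by (auto intro!: derivative_eq_intros)
      from field_vector_diff_chain_within[OF this DERIV_exp[THEN has_field_derivative_at_within]]
      have "((\<lambda>t. exp (\<i> * of_real (k * t))) has_vector_derivative
          \<i> * of_real k * exp (\<i> * of_real (k * t))) (at t within {0..T})"
        by (simp add: o_def)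
      then show ?thesis
        unfolding F_def using k T by (auto intro!: derivative_eq_intros simp: field_simps)
    qed
    then have int: "((\<lambda>t. exp (\<i> * of_real (k * t)) / T) has_integral F T - F 0) {0..T}"
      using T by (intro fundamental_theorem_of_calculus) auto
    have "\<i> * of_real (k * T) = (2 * of_int (m' - m) * pi) * \<i>"
      using T by (simp add: k_def field_simps)
    then have "exp (\<i> * of_real (k * T)) = 1"
      by (simp only: exp_integer_2pi Ints_of_int)
    then have "F T = F 0" by (simp add: F_def)
    with int have "((\<lambda>t. exp (\<i> * of_real (k * t)) / T) has_integral 0) {0..T}" by simp
    then have "integral {0..T} (\<lambda>t. exp (\<i> * of_real (k * t)) / T) = 0" by (rule integral_unique)
    then show ?thesis unfolding integrand using False by simp
  qed
qed

section \<open>The Dirichlet problem for a positive continuous weight\<close>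

locale sl_weight =
  fixes r :: "real \<Rightarrow> real"
  assumes weight_cont: "continuous_on {0..pi} r"
    and weight_pos: "\<And>x. x \<in> {0..pi} \<Longrightarrow> r x > 0"
begin

lemma weight_nonzero: "x \<in> {0..pi} \<Longrightarrow> r x \<noteq> 0"
  using weight_pos[of x] by auto

lemma weight_bound_exists: "\<exists>K\<ge>1. \<forall>x\<in>{0..pi}. r x \<le> K \<and> 1 / r x \<le> K"
proof -
  have "continuous_on {0..pi} (\<lambda>x. max (r x) (1 / r x))"
    using weight_pos by (intro continuous_intros weight_cont) fastforce
  then have "bounded ((\<lambda>x. max (r x) (1 / r x)) ` {0..pi})"
    by (intro compact_imp_bounded compact_continuous_image) auto
  then obtain B where "\<And>x. x \<in> {0..pi} \<Longrightarrow> norm (max (r x) (1 / r x)) \<le> B"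
    unfolding bounded_iff by blast
  then show ?thesis by (intro exI[of _ "max 1 B"]) force
qed

definition K :: real where
  "K = (SOME K. K \<ge> 1 \<and> (\<forall>x\<in>{0..pi}. r x \<le> K \<and> 1 / r x \<le> K))"

lemma K_bounds:
  shows "K \<ge> 1" and "\<And>x. x \<in> {0..pi} \<Longrightarrow> r x \<le> K" and "\<And>x. x \<in> {0..pi} \<Longrightarrow> 1 / r x \<le> K"
proof -
  have "K \<ge> 1 \<and> (\<forall>x\<in>{0..pi}. r x \<le> K \<and> 1 / r x \<le> K)"
    unfolding K_def by (rule someI_ex) (use weight_bound_exists in auto)
  then show "K \<ge> 1" and "\<And>x. x \<in> {0..pi} \<Longrightarrow> r x \<le> K" and "\<And>x. x \<in> {0..pi} \<Longrightarrow> 1 / r x \<le> K"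
    by auto
qed

lemma primitive_bounds:
  fixes f :: "real \<Rightarrow> real"
  assumes f_cont: "continuous_on {0..pi} f"
    and f_bound: "\<And>t. t \<in> {0..pi} \<Longrightarrow> 0 \<le> f t \<and> f t \<le> K * (K * t) ^ n / fact n"
  shows "continuous_on {0..pi} (\<lambda>x. integral {0..x} f)"
    and "\<And>x. x \<in> {0..pi} \<Longrightarrow> ((\<lambda>x. integral {0..x} f) has_real_derivative f x) (at x within {0..pi})"
    and "\<And>x. x \<in> {0..pi} \<Longrightarrow> 0 \<le> integral {0..x} f \<and> integral {0..x} f \<le> (K * x) ^ Suc n / fact (Suc n)"
proof -
  show deriv: "((\<lambda>x. integral {0..x} f) has_real_derivative f x) (at x within {0..pi})"
    if "x \<in> {0..pi}" for x
    using integral_has_vector_derivative[OF f_cont that]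
    by (simp add: has_real_derivative_iff_has_vector_derivative)
  then show "continuous_on {0..pi} (\<lambda>x. integral {0..x} f)"
    by (meson DERIV_continuous continuous_on_eq_continuous_within)
  fix x assume x: "x \<in> {0..pi}"
  then have sub: "{0..x} \<subseteq> {0..pi}" by auto
  have f_int: "f integrable_on {0..x}"
    by (intro integrable_continuous_interval continuous_on_subset[OF f_cont sub])
  have "0 \<le> integral {0..x} f"
    using f_bound sub by (intro integral_nonneg f_int) auto
  moreover have "((\<lambda>t. (K * t) ^ Suc n / fact (Suc n)) has_real_derivative K * (K * t) ^ n / fact n)
      (at t within {0..x})" for t
  proof -
    have "((\<lambda>t. (K * t) ^ Suc n / fact (Suc n)) has_real_derivative
        (real (Suc n) * (K * t) ^ n * K) / fact (Suc n)) (at t within {0..x})"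
      by (rule derivative_eq_intros refl | simp)+
    moreover have "(real (Suc n) * (K * t) ^ n * K) / fact (Suc n) = K * (K * t) ^ n / fact n"
      by (simp add: fact_Suc del: of_nat_Suc)
    ultimately show ?thesis by (simp only:)
  qed
  then have "((\<lambda>t. K * (K * t) ^ n / fact n) has_integral (K * x) ^ Suc n / fact (Suc n)) {0..x}"
    using fundamental_theorem_of_calculus[of 0 x "\<lambda>t. (K * t) ^ Suc n / fact (Suc n)"] x
    by (simp add: has_real_derivative_iff_has_vector_derivative)
  then have "integral {0..x} f \<le> (K * x) ^ Suc n / fact (Suc n)"
    using f_bound sub by (intro has_integral_le[OF integrable_integral[OF f_int]]) auto
  ultimately show "0 \<le> integral {0..x} f \<and> integral {0..x} f \<le> (K * x) ^ Suc n / fact (Suc n)"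
    by auto
qed

text \<open>
  Writing \<open>y = \<Sum>\<^sub>j (-\<mu>)\<^sup>j a\<^sub>j\<close> and \<open>\<rho> y' = \<Sum>\<^sub>j (-\<mu>)\<^sup>j b\<^sub>j\<close>
  (\<open>a\<^sub>j = sol_coeff j\<close>, \<open>b\<^sub>j = flux_coeff j\<close>), the equation \<open>(\<rho> y')' = -\<mu> \<rho> y\<close>
  with \<open>y(0) = 0\<close>, \<open>(\<rho> y')(0) = 1\<close> becomes \<open>b\<^sub>0 = 1\<close>, \<open>a\<^sub>j' = b\<^sub>j / \<rho>\<close>, \<open>b\<^sub>j\<^sub>+\<^sub>1' = \<rho> a\<^sub>j\<close>,
  all other values at \<open>0\<close> being \<open>0\<close>.
\<close>

primrec flux_coeff :: "nat \<Rightarrow> real \<Rightarrow> real" where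
  "flux_coeff 0 = (\<lambda>x. 1)"
| "flux_coeff (Suc j) = (\<lambda>x. integral {0..x} (\<lambda>t. r t * integral {0..t} (\<lambda>s. flux_coeff j s / r s)))"

definition sol_coeff :: "nat \<Rightarrow> real \<Rightarrow> real" where
  "sol_coeff j x = integral {0..x} (\<lambda>s. flux_coeff j s / r s)"

lemma flux_coeff_Suc: "flux_coeff (Suc j) = (\<lambda>x. integral {0..x} (\<lambda>t. r t * sol_coeff j t))"
  by (simp add: sol_coeff_def)

lemma coeff_props:
  "continuous_on {0..pi} (flux_coeff j)
   \<and> (\<forall>x\<in>{0..pi}. 0 \<le> flux_coeff j x \<and> flux_coeff j x \<le> (K * x) ^ (2 * j) / fact (2 * j))
   \<and> continuous_on {0..pi} (sol_coeff j)
   \<and> (\<forall>x\<in>{0..pi}. 0 \<le> sol_coeff j x \<and> sol_coeff j x \<le> (K * x) ^ Suc (2 * j) / fact (Suc (2 * j)))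
   \<and> (\<forall>x\<in>{0..pi}. (sol_coeff j has_real_derivative flux_coeff j x / r x) (at x within {0..pi}))"
proof (induction j)
  case 0
  have "continuous_on {0..pi} (\<lambda>s. flux_coeff 0 s / r s)"
    using weight_nonzero by (auto intro!: continuous_intros weight_cont)
  moreover have "0 \<le> flux_coeff 0 t / r t \<and> flux_coeff 0 t / r t \<le> K * (K * t) ^ 0 / fact 0"
    if "t \<in> {0..pi}" for t
    using K_bounds(3)[OF that] weight_pos[OF that] by auto
  ultimately show ?case
    using primitive_bounds[of "\<lambda>s. flux_coeff 0 s / r s" 0] by (auto simp: sol_coeff_def[abs_def])
next
  case (Suc j)
  have "continuous_on {0..pi} (\<lambda>t. r t * sol_coeff j t)"
    using Suc.IH by (auto intro!: continuous_intros weight_cont)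
  moreover have "0 \<le> r t * sol_coeff j t \<and> r t * sol_coeff j t \<le> K * (K * t) ^ Suc (2 * j) / fact (Suc (2 * j))"
    if t: "t \<in> {0..pi}" for t
  proof -
    have "0 \<le> sol_coeff j t" "sol_coeff j t \<le> (K * t) ^ Suc (2 * j) / fact (Suc (2 * j))"
      using Suc.IH t by auto
    moreover have "0 < r t" "r t \<le> K" using weight_pos[OF t] K_bounds(2)[OF t] by auto
    ultimately have "r t * sol_coeff j t \<le> K * ((K * t) ^ Suc (2 * j) / fact (Suc (2 * j)))"
      by (intro mult_mono) auto
    with \<open>0 \<le> sol_coeff j t\<close> \<open>0 < r t\<close> show ?thesis by (simp only: times_divide_eq_right) simp
  qed
  ultimately have flux_cont: "continuous_on {0..pi} (flux_coeff (Suc j))"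
    and flux_bound: "\<forall>x\<in>{0..pi}. 0 \<le> flux_coeff (Suc j) x
      \<and> flux_coeff (Suc j) x \<le> (K * x) ^ (2 * Suc j) / fact (2 * Suc j)"
    using primitive_bounds(1,3)[of "\<lambda>t. r t * sol_coeff j t" "Suc (2 * j)"]
    unfolding flux_coeff_Suc by (auto simp del: flux_coeff.simps)
  have "continuous_on {0..pi} (\<lambda>s. flux_coeff (Suc j) s / r s)"
    using weight_nonzero flux_cont by (auto intro!: continuous_intros weight_cont)
  moreover have "0 \<le> flux_coeff (Suc j) t / r t
      \<and> flux_coeff (Suc j) t / r t \<le> K * (K * t) ^ (2 * Suc j) / fact (2 * Suc j)" if t: "t \<in> {0..pi}" for t
  proof -
    have "0 \<le> flux_coeff (Suc j) t" "flux_coeff (Suc j) t \<le> (K * t) ^ (2 * Suc j) / fact (2 * Suc j)"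
      using flux_bound t by auto
    moreover have "0 < r t" "1 / r t \<le> K" using weight_pos[OF t] K_bounds(3)[OF t] by auto
    ultimately have "flux_coeff (Suc j) t * (1 / r t) \<le> (K * t) ^ (2 * Suc j) / fact (2 * Suc j) * K"
      by (intro mult_mono) auto
    with \<open>0 \<le> flux_coeff (Suc j) t\<close> \<open>0 < r t\<close> show ?thesis by (auto simp: field_simps)
  qed
  ultimately show ?case
    using flux_cont flux_bound primitive_bounds[of "\<lambda>s. flux_coeff (Suc j) s / r s" "2 * Suc j"]
    by (auto simp: sol_coeff_def[abs_def] simp del: flux_coeff.simps)
qed

lemma flux_coeff_cont: "continuous_on {0..pi} (flux_coeff j)"
  and flux_coeff_bound: "x \<in> {0..pi} \<Longrightarrow> 0 \<le> flux_coeff j x \<and> flux_coeff j x \<le> (K * x) ^ (2 * j) / fact (2 * j)"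
  and sol_coeff_cont: "continuous_on {0..pi} (sol_coeff j)"
  and sol_coeff_bound:
    "x \<in> {0..pi} \<Longrightarrow> 0 \<le> sol_coeff j x \<and> sol_coeff j x \<le> (K * x) ^ Suc (2 * j) / fact (Suc (2 * j))"
  and sol_coeff_deriv:
    "x \<in> {0..pi} \<Longrightarrow> (sol_coeff j has_real_derivative flux_coeff j x / r x) (at x within {0..pi})"
  using coeff_props[of j] by auto

lemma flux_coeff_Suc_deriv:
  assumes "x \<in> {0..pi}"
  shows "(flux_coeff (Suc j) has_real_derivative r x * sol_coeff j x) (at x within {0..pi})"
proof -
  have "continuous_on {0..pi} (\<lambda>t. r t * sol_coeff j t)"
    using sol_coeff_cont by (auto intro!: continuous_intros weight_cont)
  from integral_has_vector_derivative[OF this assms] show ?thesis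
    by (simp add: has_real_derivative_iff_has_vector_derivative flux_coeff_Suc del: flux_coeff.simps)
qed

lemma sol_term_bound:
  assumes x: "x \<in> {0..pi}" and \<mu>: "\<bar>\<mu>\<bar> \<le> M"
  shows "norm ((-\<mu>) ^ j * sol_coeff j x) \<le> (K * pi) * (M * (K * pi)\<^sup>2) ^ j / fact (Suc (2 * j))"
proof -
  have "sol_coeff j x \<le> (K * x) ^ Suc (2 * j) / fact (Suc (2 * j))"
    using sol_coeff_bound[OF x] by auto
  also have "\<dots> \<le> (K * pi) ^ Suc (2 * j) / fact (Suc (2 * j))"
    using x K_bounds(1) by (intro divide_right_mono power_mono mult_left_mono) auto
  finally have "\<bar>\<mu>\<bar> ^ j * \<bar>sol_coeff j x\<bar> \<le> M ^ j * ((K * pi) ^ Suc (2 * j) / fact (Suc (2 * j)))"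
    using sol_coeff_bound[OF x] \<mu> by (intro mult_mono power_mono) auto
  then show ?thesis
    by (simp add: abs_mult power_abs power_mult_distrib power_mult[symmetric] field_simps)
qed

lemma flux_term_bound:
  assumes x: "x \<in> {0..pi}" and \<mu>: "\<bar>\<mu>\<bar> \<le> M"
  shows "norm ((-\<mu>) ^ j * flux_coeff j x) \<le> (M * (K * pi)\<^sup>2) ^ j / fact (2 * j)"
proof -
  have "flux_coeff j x \<le> (K * x) ^ (2 * j) / fact (2 * j)"
    using flux_coeff_bound[OF x] by auto
  also have "\<dots> \<le> (K * pi) ^ (2 * j) / fact (2 * j)"
    using x K_bounds(1) by (intro divide_right_mono power_mono mult_left_mono) auto
  finally have "\<bar>\<mu>\<bar> ^ j * \<bar>flux_coeff j x\<bar> \<le> M ^ j * ((K * pi) ^ (2 * j) / fact (2 * j))"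
    using flux_coeff_bound[OF x] \<mu> by (intro mult_mono power_mono) auto
  then show ?thesis
    by (simp add: abs_mult power_abs power_mult_distrib power_mult[symmetric] field_simps)
qed

lemma summable_sol_majorant:
  "M \<ge> 0 \<Longrightarrow> summable (\<lambda>j. (K * pi) * (M * (K * pi)\<^sup>2) ^ j / fact (Suc (2 * j)))"
  using summable_mult[OF summable_power_div_fact_reindex[of "M * (K * pi)\<^sup>2" "\<lambda>j. Suc (2 * j)"], of "K * pi"]
  by (simp add: mult.assoc times_divide_eq_right)

lemma summable_flux_majorant:
  "M \<ge> 0 \<Longrightarrow> summable (\<lambda>j. (M * (K * pi)\<^sup>2) ^ j / fact (2 * j))"
  using summable_power_div_fact_reindex[of "M * (K * pi)\<^sup>2" "\<lambda>j. 2 * j"] by simp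

definition sol :: "real \<Rightarrow> real \<Rightarrow> real" where
  "sol \<mu> x = (\<Sum>j. (-\<mu>) ^ j * sol_coeff j x)"

definition flux :: "real \<Rightarrow> real \<Rightarrow> real" where
  "flux \<mu> x = (\<Sum>j. (-\<mu>) ^ j * flux_coeff j x)"

lemma summable_sol_series:
  assumes "x \<in> {0..pi}"
  shows "summable (\<lambda>j. (-\<mu>) ^ j * sol_coeff j x)"
proof (rule summable_comparison_test'[OF summable_sol_majorant[of "\<bar>\<mu>\<bar>"]])
  show "norm ((-\<mu>) ^ j * sol_coeff j x) \<le> (K * pi) * (\<bar>\<mu>\<bar> * (K * pi)\<^sup>2) ^ j / fact (Suc (2 * j))" for j
    by (rule sol_term_bound[OF assms]) simp
qed simp

lemma summable_flux_series:
  assumes "x \<in> {0..pi}"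
  shows "summable (\<lambda>j. (-\<mu>) ^ j * flux_coeff j x)"
proof (rule summable_comparison_test'[OF summable_flux_majorant[of "\<bar>\<mu>\<bar>"]])
  show "norm ((-\<mu>) ^ j * flux_coeff j x) \<le> (\<bar>\<mu>\<bar> * (K * pi)\<^sup>2) ^ j / fact (2 * j)" for j
    by (rule flux_term_bound[OF assms]) simp
qed simp

lemma sol_at_0: "sol \<mu> 0 = 0"
  by (simp add: sol_def sol_coeff_def)

lemma flux_at_0: "flux \<mu> 0 = 1"
proof -
  have "flux_coeff j 0 = (if j = 0 then 1 else 0)" for j
    by (cases j) auto
  then have "(\<lambda>j. (-\<mu>) ^ j * flux_coeff j 0) = (\<lambda>j. if j = 0 then (\<lambda>_. 1::real) j else 0)"
    by auto
  then show ?thesis unfolding flux_def using sums_single[of 0 "\<lambda>_. 1::real"] by (simp add: sums_iff)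
qed

lemma sol_deriv:
  assumes x: "x \<in> {0..pi}"
  shows "(sol \<mu> has_real_derivative flux \<mu> x / r x) (at x within {0..pi})"
proof -
  have unif: "uniform_limit {0..pi} (\<lambda>n x. \<Sum>i<n. (-\<mu>) ^ i * (flux_coeff i x / r x))
      (\<lambda>x. \<Sum>i. (-\<mu>) ^ i * (flux_coeff i x / r x)) sequentially"
  proof (rule Weierstrass_m_test)
    show "summable (\<lambda>j. K * ((\<bar>\<mu>\<bar> * (K * pi)\<^sup>2) ^ j / fact (2 * j)))"
      by (intro summable_mult summable_flux_majorant) simp
    fix n and y :: real assume y: "y \<in> {0..pi}"
    have "norm ((-\<mu>) ^ n * (flux_coeff n y / r y)) = norm ((-\<mu>) ^ n * flux_coeff n y) * (1 / r y)"
      using weight_pos[OF y] by (simp add: abs_mult)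
    also have "\<dots> \<le> ((\<bar>\<mu>\<bar> * (K * pi)\<^sup>2) ^ n / fact (2 * n)) * K"
      using flux_term_bound[OF y, of \<mu> "\<bar>\<mu>\<bar>" n] K_bounds(3)[OF y] weight_pos[OF y]
      by (intro mult_mono) auto
    finally show "norm ((-\<mu>) ^ n * (flux_coeff n y / r y)) \<le> K * ((\<bar>\<mu>\<bar> * (K * pi)\<^sup>2) ^ n / fact (2 * n))"
      by (simp add: mult.commute)
  qed
  have term_deriv: "((\<lambda>x. (-\<mu>) ^ n * sol_coeff n x) has_field_derivative (-\<mu>) ^ n * (flux_coeff n y / r y))
      (at y within {0..pi})" if "y \<in> {0..pi}" for n y
    using sol_coeff_deriv[OF that, of n] by (auto intro!: derivative_eq_intros)
  have "(0::real) \<in> {0..pi}" by auto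
  from has_field_derivative_series[OF convex_real_interval(5) term_deriv unif this summable_sol_series[OF this]]
  obtain g where g: "\<And>y. y \<in> {0..pi} \<Longrightarrow> (\<lambda>n. (-\<mu>) ^ n * sol_coeff n y) sums g y \<and>
      (g has_field_derivative (\<Sum>i. (-\<mu>) ^ i * (flux_coeff i y / r y))) (at y within {0..pi})"
    by blast
  have "(\<Sum>i. (-\<mu>) ^ i * (flux_coeff i x / r x)) = flux \<mu> x / r x"
    unfolding flux_def using suminf_divide[OF summable_flux_series[OF x, of \<mu>], of "r x"]
    by (simp add: field_simps)
  with g[OF x] have "(g has_field_derivative flux \<mu> x / r x) (at x within {0..pi})" by simp
  then show ?thesis
    by (rule has_field_derivative_transform_within[OF _ zero_less_one x])
      (use g in \<open>auto simp: sol_def sums_iff\<close>)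
qed

lemma flux_deriv:
  assumes x: "x \<in> {0..pi}"
  shows "(flux \<mu> has_real_derivative - \<mu> * r x * sol \<mu> x) (at x within {0..pi})"
proof -
  have unif: "uniform_limit {0..pi} (\<lambda>n x. \<Sum>i<n. (-\<mu>) ^ Suc i * (r x * sol_coeff i x))
      (\<lambda>x. \<Sum>i. (-\<mu>) ^ Suc i * (r x * sol_coeff i x)) sequentially"
  proof (rule Weierstrass_m_test)
    show "summable (\<lambda>j. (\<bar>\<mu>\<bar> * K) * ((K * pi) * (\<bar>\<mu>\<bar> * (K * pi)\<^sup>2) ^ j / fact (Suc (2 * j))))"
      by (intro summable_mult summable_sol_majorant) simp
    fix n and y :: real assume y: "y \<in> {0..pi}"
    have "norm ((-\<mu>) ^ Suc n * (r y * sol_coeff n y)) = (\<bar>\<mu>\<bar> * r y) * norm ((-\<mu>) ^ n * sol_coeff n y)"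
      using weight_pos[OF y] by (simp add: abs_mult)
    also have "\<dots> \<le> (\<bar>\<mu>\<bar> * K) * ((K * pi) * (\<bar>\<mu>\<bar> * (K * pi)\<^sup>2) ^ n / fact (Suc (2 * n)))"
      using sol_term_bound[OF y, of \<mu> "\<bar>\<mu>\<bar>" n] K_bounds(2)[OF y] weight_pos[OF y]
      by (intro mult_mono) auto
    finally show "norm ((-\<mu>) ^ Suc n * (r y * sol_coeff n y))
        \<le> (\<bar>\<mu>\<bar> * K) * ((K * pi) * (\<bar>\<mu>\<bar> * (K * pi)\<^sup>2) ^ n / fact (Suc (2 * n)))" .
  qed
  have term_deriv: "((\<lambda>x. (-\<mu>) ^ Suc n * flux_coeff (Suc n) x) has_field_derivative
      (-\<mu>) ^ Suc n * (r y * sol_coeff n y)) (at y within {0..pi})" if "y \<in> {0..pi}" for n y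
    using flux_coeff_Suc_deriv[OF that, of n]
    by (auto intro!: derivative_eq_intros simp del: flux_coeff.simps power_Suc)
  have zero: "(0::real) \<in> {0..pi}" by auto
  have "summable (\<lambda>n. (-\<mu>) ^ Suc n * flux_coeff (Suc n) 0)"
    using summable_flux_series[OF zero, of \<mu>] by (subst summable_Suc_iff) auto
  from has_field_derivative_series[OF convex_real_interval(5) term_deriv unif zero this]
  obtain g where g: "\<And>y. y \<in> {0..pi} \<Longrightarrow> (\<lambda>n. (-\<mu>) ^ Suc n * flux_coeff (Suc n) y) sums g y \<and>
      (g has_field_derivative (\<Sum>i. (-\<mu>) ^ Suc i * (r y * sol_coeff i y))) (at y within {0..pi})"
    by blast
  have "(\<Sum>i. (-\<mu>) ^ Suc i * (r x * sol_coeff i x)) = (- \<mu> * r x) * sol \<mu> x"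
    unfolding sol_def using suminf_mult[OF summable_sol_series[OF x, of \<mu>], of "- \<mu> * r x"]
    by (simp add: field_simps)
  with g[OF x] have "((\<lambda>y. g y + 1) has_field_derivative (- \<mu> * r x) * sol \<mu> x) (at x within {0..pi})"
    by (auto intro!: derivative_eq_intros)
  moreover have "g y + 1 = flux \<mu> y" if "y \<in> {0..pi}" for y
    using g[OF that] suminf_split_head[OF summable_flux_series[OF that, of \<mu>]]
    by (simp add: flux_def sums_iff del: power_Suc)
  ultimately show ?thesis
    using has_field_derivative_transform_within[OF _ zero_less_one x] by simp
qed

lemma cauchy_problem_unique:
  fixes D E :: "real \<Rightarrow> real"
  assumes x0: "x0 \<in> {0..pi}" "D x0 = 0" "E x0 = 0"
    and dD: "\<And>x. x \<in> {0..pi} \<Longrightarrow> (D has_real_derivative E x / r x) (at x within {0..pi})"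
    and dE: "\<And>x. x \<in> {0..pi} \<Longrightarrow> (E has_real_derivative - \<mu> * r x * D x) (at x within {0..pi})"
    and x: "x \<in> {0..pi}"
  shows "D x = 0 \<and> E x = 0"
proof -
  define V where "V x = (D x)\<^sup>2 + (E x)\<^sup>2" for x
  define V' where "V' x = 2 * D x * (E x / r x) + 2 * E x * (- \<mu> * r x * D x)" for x
  have dV: "(V has_real_derivative V' x) (at x within {0..pi})" if "x \<in> {0..pi}" for x
    unfolding V_def V'_def using dD[OF that] dE[OF that] by (auto intro!: derivative_eq_intros)
  have growth: "\<bar>V' x\<bar> \<le> (K + \<bar>\<mu>\<bar> * K) * V x" if "x \<in> {0..pi}" for x
  proof -
    have "V' x = (2 * D x * E x) * (1 / r x - \<mu> * r x)" unfolding V'_def by (simp add: field_simps)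
    also have "\<bar>\<dots>\<bar> = \<bar>2 * D x * E x\<bar> * \<bar>1 / r x - \<mu> * r x\<bar>" by (simp add: abs_mult)
    also have "\<dots> \<le> V x * (K + \<bar>\<mu>\<bar> * K)"
    proof (rule mult_mono)
      show "\<bar>2 * D x * E x\<bar> \<le> V x" unfolding V_def
        using sum_squares_bound[of "D x" "E x"] sum_squares_bound[of "- D x" "E x"] by (auto simp: abs_if)
      have "\<bar>1 / r x - \<mu> * r x\<bar> \<le> \<bar>1 / r x\<bar> + \<bar>\<mu>\<bar> * \<bar>r x\<bar>"
        using abs_triangle_ineq4[of "1 / r x" "\<mu> * r x"] by (simp add: abs_mult)
      also have "\<dots> \<le> K + \<bar>\<mu>\<bar> * K"
        using K_bounds(2,3)[OF that] weight_pos[OF that] mult_left_mono[of "r x" K "\<bar>\<mu>\<bar>"] by auto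
      finally show "\<bar>1 / r x - \<mu> * r x\<bar> \<le> K + \<bar>\<mu>\<bar> * K" .
    qed (auto simp: V_def)
    finally show ?thesis by (simp add: mult.commute)
  qed
  have "V x = 0"
    by (rule gronwall_vanishing[OF dV growth _ x0(1) _ x]) (simp_all add: V_def x0)
  then show ?thesis unfolding V_def by (simp add: sum_power2_eq_zero_iff)
qed

lemma sol_flux_not_both_zero: "x \<in> {0..pi} \<Longrightarrow> sol \<mu> x = 0 \<Longrightarrow> flux \<mu> x = 0 \<Longrightarrow> False"
  using cauchy_problem_unique[of x "sol \<mu>" "flux \<mu>" \<mu> 0] sol_deriv flux_deriv flux_at_0 by auto

lemma eigenfun_multiple_of_sol:
  assumes "sl_eigenfun r \<mu> \<phi>"
  shows "\<exists>c. c \<noteq> 0 \<and> (\<forall>x\<in>{0..pi}. \<phi> x = c * sol \<mu> x)"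
proof -
  obtain \<phi>' where d: "\<And>x. x \<in> {0..pi} \<Longrightarrow> (\<phi> has_real_derivative \<phi>' x) (at x within {0..pi}) \<and>
        ((\<lambda>y. r y * \<phi>' y) has_real_derivative (- \<mu> * r x * \<phi> x)) (at x within {0..pi})"
    and b: "\<phi> 0 = 0" "\<phi> pi = 0" and nz: "\<exists>x\<in>{0..pi}. \<phi> x \<noteq> 0"
    using assms unfolding sl_eigenfun_def by blast
  define c where "c = r 0 * \<phi>' 0"
  define D where "D x = \<phi> x - c * sol \<mu> x" for x
  define E where "E x = r x * \<phi>' x - c * flux \<mu> x" for x
  have dD: "(D has_real_derivative E x / r x) (at x within {0..pi})" if x: "x \<in> {0..pi}" for x
  proof -
    have "(D has_real_derivative \<phi>' x - c * (flux \<mu> x / r x)) (at x within {0..pi})"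
      unfolding D_def using d[OF x] sol_deriv[OF x, of \<mu>] by (auto intro!: derivative_eq_intros)
    moreover have "\<phi>' x - c * (flux \<mu> x / r x) = E x / r x"
      unfolding E_def using weight_nonzero[OF x] by (simp add: field_simps)
    ultimately show ?thesis by simp
  qed
  have dE: "(E has_real_derivative - \<mu> * r x * D x) (at x within {0..pi})" if x: "x \<in> {0..pi}" for x
  proof -
    have "(E has_real_derivative (- \<mu> * r x * \<phi> x) - c * (- \<mu> * r x * sol \<mu> x)) (at x within {0..pi})"
      unfolding E_def using d[OF x] flux_deriv[OF x, of \<mu>] by (intro DERIV_diff DERIV_cmult) auto
    moreover have "(- \<mu> * r x * \<phi> x) - c * (- \<mu> * r x * sol \<mu> x) = - \<mu> * r x * D x"
      unfolding D_def by (simp add: field_simps)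
    ultimately show ?thesis by simp
  qed
  have z: "D 0 = 0" "E 0 = 0" unfolding D_def E_def c_def using b sol_at_0 flux_at_0 by auto
  have eq: "\<phi> x = c * sol \<mu> x" if "x \<in> {0..pi}" for x
    using cauchy_problem_unique[of 0 D E \<mu> x, OF _ z dD dE that] by (auto simp: D_def)
  have "c \<noteq> 0" using nz eq by auto
  with eq show ?thesis by blast
qed

lemma sol_not_identically_zero: "\<exists>x\<in>{0..pi}. sol \<mu> x \<noteq> 0"
proof (rule ccontr)
  assume "\<not> ?thesis"
  then have z: "\<And>x. x \<in> {0..pi} \<Longrightarrow> sol \<mu> x = 0" by auto
  define m where "m = pi / 2"
  have m: "m \<in> {0..pi}" "m \<in> interior {0..pi}" by (auto simp: m_def)
  have w: "flux \<mu> m \<noteq> 0" using sol_flux_not_both_zero[OF m(1)] z[OF m(1)] by auto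
  have d1: "(sol \<mu> has_real_derivative flux \<mu> m / r m) (at m)"
    using sol_deriv[OF m(1)] at_within_interior[OF m(2)] by simp
  have "((\<lambda>_. 0::real) has_real_derivative 0) (at m within {0..pi})" by simp
  then have "(sol \<mu> has_real_derivative 0) (at m within {0..pi})"
    by (rule has_field_derivative_transform_within[where d=1]) (use m z in auto)
  then have d2: "(sol \<mu> has_real_derivative 0) (at m)" using at_within_interior[OF m(2)] by simp
  have "flux \<mu> m / r m = 0" using DERIV_unique[OF d1 d2] .
  then show False using w weight_nonzero[OF m(1)] by simp
qed

lemma sl_spec_iff_sol_pi: "\<mu> \<in> sl_spec r \<longleftrightarrow> sol \<mu> pi = 0"
proof
  assume "\<mu> \<in> sl_spec r"
  then obtain \<phi> where e: "sl_eigenfun r \<mu> \<phi>" unfolding sl_spec_def by auto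
  then obtain c where "c \<noteq> 0" "\<forall>x\<in>{0..pi}. \<phi> x = c * sol \<mu> x"
    using eigenfun_multiple_of_sol by blast
  moreover have "\<phi> pi = 0" using e unfolding sl_eigenfun_def by auto
  ultimately show "sol \<mu> pi = 0" by auto
next
  assume p: "sol \<mu> pi = 0"
  have "sl_eigenfun r \<mu> (sol \<mu>)"
    unfolding sl_eigenfun_def
  proof (intro conjI exI[of _ "\<lambda>x. flux \<mu> x / r x"] ballI)
    fix x :: real assume x: "x \<in> {0..pi}"
    show "(sol \<mu> has_real_derivative flux \<mu> x / r x) (at x within {0..pi})"
      by (rule sol_deriv[OF x])
    show "((\<lambda>y. r y * (flux \<mu> y / r y)) has_real_derivative - \<mu> * r x * sol \<mu> x) (at x within {0..pi})"
      by (rule has_field_derivative_transform_within[OF flux_deriv[OF x] zero_less_one x])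
        (use weight_nonzero in auto)
  qed (use p sol_at_0 sol_not_identically_zero in auto)
  then show "\<mu> \<in> sl_spec r" unfolding sl_spec_def by auto
qed

lemma sol_coeff_0_pi_pos: "sol_coeff 0 pi > 0"
proof -
  have "continuous_on {0..pi} (\<lambda>s. 1 / r s)"
    using weight_nonzero by (auto intro!: continuous_intros weight_cont)
  then have "integral {0..pi} (\<lambda>s. 1 / K) \<le> integral {0..pi} (\<lambda>s. 1 / r s)"
  proof (intro integral_le integrable_continuous_interval)
    fix s assume s: "s \<in> {0..pi}"
    show "1 / K \<le> 1 / r s" using K_bounds(2)[OF s] weight_pos[OF s] by (intro divide_left_mono) auto
  qed auto
  moreover have "integral {0..pi} (\<lambda>s. 1 / K) > 0" using K_bounds(1) by simp
  ultimately show ?thesis by (simp add: sol_coeff_def)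
qed

lemma sol_pi_pos_if_nonpos:
  assumes "\<mu> \<le> 0"
  shows "sol \<mu> pi > 0"
proof -
  have pi: "pi \<in> {0..pi}" by auto
  have "sum (\<lambda>j. (-\<mu>) ^ j * sol_coeff j pi) {0} \<le> sol \<mu> pi"
    unfolding sol_def using sol_coeff_bound[OF pi] assms
    by (intro sum_le_suminf summable_sol_series pi) auto
  then show ?thesis using sol_coeff_0_pi_pos by simp
qed

lemma sl_spec_pos: "\<mu> \<in> sl_spec r \<Longrightarrow> \<mu> > 0"
  using sol_pi_pos_if_nonpos[of \<mu>] sl_spec_iff_sol_pi by force

definition char_fun :: "complex \<Rightarrow> complex" where
  "char_fun z = (\<Sum>j. ((-1) ^ j * of_real (sol_coeff j pi)) * z ^ j)"

lemma summable_char_series: "summable (\<lambda>j. ((-1) ^ j * of_real (sol_coeff j pi)) * (z::complex) ^ j)"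
proof (rule summable_comparison_test'[OF summable_sol_majorant[of "norm z"]])
  have pi: "pi \<in> {0..pi}" by auto
  fix j :: nat
  have "norm (((-1) ^ j * of_real (sol_coeff j pi)) * z ^ j) = norm ((- norm z) ^ j * sol_coeff j pi)"
    by (simp add: norm_mult norm_power abs_mult power_abs)
  also have "\<dots> \<le> (K * pi) * (norm z * (K * pi)\<^sup>2) ^ j / fact (Suc (2 * j))"
    by (rule sol_term_bound[OF pi]) simp
  finally show "norm (((-1) ^ j * of_real (sol_coeff j pi)) * z ^ j)
      \<le> (K * pi) * (norm z * (K * pi)\<^sup>2) ^ j / fact (Suc (2 * j))" .
qed simp

lemma char_fun_of_real: "char_fun (of_real \<mu>) = of_real (sol \<mu> pi)"
proof -
  have pi: "pi \<in> {0..pi}" by auto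
  have "(\<lambda>j. of_real ((-\<mu>) ^ j * sol_coeff j pi) :: complex) sums of_real (sol \<mu> pi)"
    unfolding sol_def by (rule sums_of_real[OF summable_sums[OF summable_sol_series[OF pi]]])
  moreover have "(\<lambda>j. of_real ((-\<mu>) ^ j * sol_coeff j pi) :: complex)
      = (\<lambda>j. ((-1) ^ j * of_real (sol_coeff j pi)) * (of_real \<mu>) ^ j)"
    by (auto simp: power_minus')
  ultimately show ?thesis unfolding char_fun_def by (simp add: sums_iff)
qed

lemma char_fun_holomorphic: "char_fun holomorphic_on UNIV"
proof -
  have "char_fun field_differentiable (at z)" for z
    unfolding char_fun_def[abs_def] field_differentiable_def
    using termdiffs_strong_converges_everywhere[OF summable_char_series] by blast
  then show ?thesis unfolding holomorphic_on_def by (simp add: field_differentiable_at_within)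
qed

lemma finite_sl_spec_le: "finite {\<mu> \<in> sl_spec r. \<mu> \<le> M}"
proof (cases "sl_spec r = {}")
  case False
  then obtain \<mu>1 where \<mu>1: "\<mu>1 \<in> sl_spec r" by auto
  have "\<not> char_fun constant_on UNIV"
  proof
    assume "char_fun constant_on UNIV"
    then have "char_fun (of_real \<mu>1) = char_fun (of_real 0)" unfolding constant_on_def by auto
    then have "sol \<mu>1 pi = sol 0 pi" using char_fun_of_real by (metis of_real_eq_iff)
    then show False using sl_spec_iff_sol_pi \<mu>1 sol_pi_pos_if_nonpos[of 0] by simp
  qed
  then have "finite {z \<in> cball 0 \<bar>M\<bar>. char_fun z = 0}"
    by (intro holomorphic_compact_finite_zeros[OF char_fun_holomorphic]) auto
  moreover have "{\<mu> \<in> sl_spec r. \<mu> \<le> M} \<subseteq> Re ` {z \<in> cball 0 \<bar>M\<bar>. char_fun z = 0}"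
  proof
    fix \<mu> assume "\<mu> \<in> {\<mu> \<in> sl_spec r. \<mu> \<le> M}"
    then have "\<mu> > 0" "\<mu> \<le> M" "sol \<mu> pi = 0" using sl_spec_pos sl_spec_iff_sol_pi by auto
    then have "of_real \<mu> \<in> {z \<in> cball 0 \<bar>M\<bar>. char_fun z = 0}" using char_fun_of_real by auto
    then show "\<mu> \<in> Re ` {z \<in> cball 0 \<bar>M\<bar>. char_fun z = 0}" by (metis Re_complex_of_real imageI)
  qed
  ultimately show ?thesis using finite_subset by blast
qed simp

lemma continuous_on_sol_flux:
  assumes M: "M \<ge> 0"
  shows "continuous_on ({0..pi} \<times> {-M..M}) (\<lambda>p. sol (snd p) (fst p))"
    and "continuous_on ({0..pi} \<times> {-M..M}) (\<lambda>p. flux (snd p) (fst p))"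
proof -
  let ?R = "{0..pi} \<times> {-M..M}"
  have sol_terms: "continuous_on ?R (\<lambda>p. (- snd p) ^ j * sol_coeff j (fst p))"
    and flux_terms: "continuous_on ?R (\<lambda>p. (- snd p) ^ j * flux_coeff j (fst p))" for j
    by (auto intro!: continuous_intros continuous_on_compose2[OF sol_coeff_cont]
        continuous_on_compose2[OF flux_coeff_cont])
  have sol_unif: "uniform_limit ?R (\<lambda>n p. \<Sum>i<n. (- snd p) ^ i * sol_coeff i (fst p))
      (\<lambda>p. \<Sum>i. (- snd p) ^ i * sol_coeff i (fst p)) sequentially"
    by (rule Weierstrass_m_test[OF _ summable_sol_majorant[OF M]], rule sol_term_bound) auto
  have flux_unif: "uniform_limit ?R (\<lambda>n p. \<Sum>i<n. (- snd p) ^ i * flux_coeff i (fst p))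
      (\<lambda>p. \<Sum>i. (- snd p) ^ i * flux_coeff i (fst p)) sequentially"
    by (rule Weierstrass_m_test[OF _ summable_flux_majorant[OF M]], rule flux_term_bound) auto
  show "continuous_on ?R (\<lambda>p. sol (snd p) (fst p))"
    unfolding sol_def by (rule uniform_limit_theorem[OF _ sol_unif])
      (auto intro!: always_eventually continuous_on_sum sol_terms)
  show "continuous_on ?R (\<lambda>p. flux (snd p) (fst p))"
    unfolding flux_def by (rule uniform_limit_theorem[OF _ flux_unif])
      (auto intro!: always_eventually continuous_on_sum flux_terms)
qed

text \<open>
  Pruefer transformation: for \<open>\<mu> > 0\<close>, \<open>y(\<mu>, \<pi>) = 0\<close> exactly when the argument of
  \<open>pruefer \<mu> \<pi>\<close> is an odd multiple of \<open>\<pi>/2\<close>.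
\<close>

definition pruefer :: "real \<Rightarrow> real \<Rightarrow> complex" where
  "pruefer \<mu> x = complex_of_real (sqrt \<mu> * sol \<mu> x) + \<i> * complex_of_real (flux \<mu> x)"

definition pruefer_deriv :: "real \<Rightarrow> real \<Rightarrow> complex" where
  "pruefer_deriv \<mu> x = complex_of_real (sqrt \<mu> * (flux \<mu> x / r x)) + \<i> * complex_of_real (- \<mu> * r x * sol \<mu> x)"

lemma pruefer_Re: "Re (pruefer \<mu> x) = sqrt \<mu> * sol \<mu> x"
  and pruefer_Im: "Im (pruefer \<mu> x) = flux \<mu> x"
  and pruefer_deriv_Re: "Re (pruefer_deriv \<mu> x) = sqrt \<mu> * (flux \<mu> x / r x)"
  and pruefer_deriv_Im: "Im (pruefer_deriv \<mu> x) = - \<mu> * r x * sol \<mu> x"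
  by (simp_all add: pruefer_def pruefer_deriv_def)

lemma pruefer_nonzero: "x \<in> {0..pi} \<Longrightarrow> \<mu> \<ge> 1 \<Longrightarrow> pruefer \<mu> x \<noteq> 0"
  using sol_flux_not_both_zero[of x \<mu>] by (auto simp: complex_eq_iff pruefer_Re pruefer_Im)

lemma pruefer_has_vector_derivative:
  "x \<in> {0..pi} \<Longrightarrow> (pruefer \<mu> has_vector_derivative pruefer_deriv \<mu> x) (at x within {0..pi})"
  unfolding has_vector_derivative_complex_iff pruefer_Re pruefer_Im pruefer_deriv_Re pruefer_deriv_Im
  using sol_deriv flux_deriv by (auto intro!: derivative_eq_intros)

lemma continuous_on_pruefer:
  assumes "M \<ge> 1"
  shows "continuous_on ({0..pi} \<times> {1..M}) (\<lambda>p. pruefer (snd p) (fst p))"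
proof -
  have sub: "{0..pi} \<times> {1..M} \<subseteq> {0..pi} \<times> {-M..M}" using assms by auto
  have "continuous_on ({0..pi} \<times> {1..M}) (\<lambda>p. sol (snd p) (fst p))"
    and "continuous_on ({0..pi} \<times> {1..M}) (\<lambda>p. flux (snd p) (fst p))"
    using continuous_on_subset[OF continuous_on_sol_flux(1) sub]
      continuous_on_subset[OF continuous_on_sol_flux(2) sub] assms by auto
  then show ?thesis unfolding pruefer_def by (intro continuous_intros) auto
qed

lemma Im_pruefer_log_deriv_bounds:
  assumes x: "x \<in> {0..pi}" and \<mu>: "\<mu> \<ge> 1"
  shows "- sqrt \<mu> * K \<le> Im (pruefer_deriv \<mu> x / pruefer \<mu> x)"
    and "Im (pruefer_deriv \<mu> x / pruefer \<mu> x) \<le> - sqrt \<mu> / K"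
proof -
  define P where "P = \<mu> * (sol \<mu> x)\<^sup>2"
  define Q where "Q = (flux \<mu> x)\<^sup>2"
  have PQ: "P \<ge> 0" "Q \<ge> 0" using \<mu> by (auto simp: P_def Q_def)
  have "sol \<mu> x \<noteq> 0 \<or> flux \<mu> x \<noteq> 0" using sol_flux_not_both_zero[OF x] by blast
  then have "P > 0 \<or> Q > 0" using \<mu> by (auto simp: P_def Q_def zero_less_mult_iff)
  then have "P + Q > 0" using PQ by linarith
  have "Im (pruefer_deriv \<mu> x / pruefer \<mu> x) = - sqrt \<mu> * ((r x * P + Q / r x) / (P + Q))"
  proof -
    have "Im (pruefer_deriv \<mu> x / pruefer \<mu> x)
        = ((- \<mu> * r x * sol \<mu> x) * (sqrt \<mu> * sol \<mu> x) - (sqrt \<mu> * (flux \<mu> x / r x)) * flux \<mu> x)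
          / ((sqrt \<mu> * sol \<mu> x)\<^sup>2 + (flux \<mu> x)\<^sup>2)"
      by (simp add: Im_divide pruefer_Re pruefer_Im pruefer_deriv_Re pruefer_deriv_Im)
    also have "(sqrt \<mu> * sol \<mu> x)\<^sup>2 + (flux \<mu> x)\<^sup>2 = P + Q"
      using \<mu> by (simp add: P_def Q_def power_mult_distrib)
    also have "(- \<mu> * r x * sol \<mu> x) * (sqrt \<mu> * sol \<mu> x) - (sqrt \<mu> * (flux \<mu> x / r x)) * flux \<mu> x
        = - sqrt \<mu> * (r x * P + Q / r x)"
      using \<mu> by (simp add: P_def Q_def power2_eq_square algebra_simps)
    finally show ?thesis by simp
  qed
  moreover note ratio = weighted_ratio_bounds[OF PQ \<open>P + Q > 0\<close> weight_pos[OF x] K_bounds(2,3)[OF x]]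
  moreover have "sqrt \<mu> * ((r x * P + Q / r x) / (P + Q)) \<le> sqrt \<mu> * K"
    by (rule mult_left_mono[OF ratio(2)]) (use \<mu> in simp)
  moreover have "sqrt \<mu> * (1 / K) \<le> sqrt \<mu> * ((r x * P + Q / r x) / (P + Q))"
    by (rule mult_left_mono[OF ratio(1)]) (use \<mu> in simp)
  ultimately show "- sqrt \<mu> * K \<le> Im (pruefer_deriv \<mu> x / pruefer \<mu> x)"
    and "Im (pruefer_deriv \<mu> x / pruefer \<mu> x) \<le> - sqrt \<mu> / K"
    by simp_all
qed

end

locale pruefer_log = sl_weight +
  fixes M :: real and g :: "real \<times> real \<Rightarrow> complex"
  assumes M_ge_1: "M \<ge> 1"
    and g_cont: "continuous_on ({0..pi} \<times> {1..M}) g"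
    and exp_g: "\<And>x \<mu>. x \<in> {0..pi} \<Longrightarrow> \<mu> \<in> {1..M} \<Longrightarrow> pruefer \<mu> x = exp (g (x, \<mu>))"
begin

definition angle :: "real \<Rightarrow> real \<Rightarrow> real" where
  "angle x \<mu> = Im (g (x, \<mu>))"

lemma angle_deriv:
  assumes x: "x \<in> {0..pi}" and \<mu>: "\<mu> \<in> {1..M}"
  shows "((\<lambda>x. angle x \<mu>) has_real_derivative Im (pruefer_deriv \<mu> x / pruefer \<mu> x)) (at x within {0..pi})"
proof -
  have "continuous_on {0..pi} (\<lambda>x. g (x, \<mu>))"
    by (rule continuous_on_compose2[OF g_cont]) (use \<mu> in \<open>auto intro!: continuous_intros\<close>)
  then have "continuous (at x within {0..pi}) (\<lambda>x. g (x, \<mu>))"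
    using x continuous_on_eq_continuous_within by blast
  then have "((\<lambda>x. g (x, \<mu>)) has_vector_derivative pruefer_deriv \<mu> x / pruefer \<mu> x) (at x within {0..pi})"
    using has_vector_derivative_continuous_log[OF x _ _ pruefer_has_vector_derivative[OF x]] exp_g \<mu>
    by blast
  then show ?thesis unfolding angle_def by (rule has_field_derivative_Im)
qed

lemma angle_pi_upper:
  assumes \<mu>: "\<mu> \<in> {1..M}"
  shows "angle pi \<mu> \<le> angle 0 \<mu> - pi * sqrt \<mu> / K"
proof -
  have "- angle 0 \<mu> - sqrt \<mu> * 0 / K \<le> - angle pi \<mu> - sqrt \<mu> * pi / K"
  proof (rule has_real_derivative_nonneg_imp_le[where c=0 and d=pi
        and f="\<lambda>x. - angle x \<mu> - sqrt \<mu> * x / K"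
        and f'="\<lambda>x. - Im (pruefer_deriv \<mu> x / pruefer \<mu> x) - sqrt \<mu> / K"])
    fix x :: real assume x: "x \<in> {0..pi}"
    show "((\<lambda>x. - angle x \<mu> - sqrt \<mu> * x / K) has_real_derivative
        - Im (pruefer_deriv \<mu> x / pruefer \<mu> x) - sqrt \<mu> / K) (at x within {0..pi})"
      using angle_deriv[OF x \<mu>] K_bounds(1) by (auto intro!: derivative_eq_intros)
    show "0 \<le> - Im (pruefer_deriv \<mu> x / pruefer \<mu> x) - sqrt \<mu> / K"
      using Im_pruefer_log_deriv_bounds(2)[OF x, of \<mu>] \<mu> by auto
  qed auto
  then show ?thesis by (simp add: mult.commute)
qed

lemma angle_pi_lower:
  assumes \<mu>: "\<mu> \<in> {1..M}"
  shows "angle 0 \<mu> - pi * sqrt \<mu> * K \<le> angle pi \<mu>"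
proof -
  have "angle 0 \<mu> + sqrt \<mu> * K * 0 \<le> angle pi \<mu> + sqrt \<mu> * K * pi"
  proof (rule has_real_derivative_nonneg_imp_le[where c=0 and d=pi
        and f="\<lambda>x. angle x \<mu> + sqrt \<mu> * K * x"
        and f'="\<lambda>x. Im (pruefer_deriv \<mu> x / pruefer \<mu> x) + sqrt \<mu> * K"])
    fix x :: real assume x: "x \<in> {0..pi}"
    show "((\<lambda>x. angle x \<mu> + sqrt \<mu> * K * x) has_real_derivative
        Im (pruefer_deriv \<mu> x / pruefer \<mu> x) + sqrt \<mu> * K) (at x within {0..pi})"
      using angle_deriv[OF x \<mu>] by (auto intro!: derivative_eq_intros)
    show "0 \<le> Im (pruefer_deriv \<mu> x / pruefer \<mu> x) + sqrt \<mu> * K"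
      using Im_pruefer_log_deriv_bounds(1)[OF x, of \<mu>] \<mu> by auto
  qed auto
  then show ?thesis by (simp add: algebra_simps)
qed

lemma angle_0_constant:
  assumes "\<mu> \<in> {1..M}"
  shows "angle 0 \<mu> = angle 0 1"
proof -
  have g0: "exp (g (0, \<nu>)) = \<i>" if "\<nu> \<in> {1..M}" for \<nu>
    using exp_g[of 0 \<nu>] that by (simp add: pruefer_def sol_at_0 flux_at_0)
  have "(\<lambda>\<nu>. g (0, \<nu>)) constant_on {1..M}"
  proof (rule continuous_discrete_range_constant[OF connected_Icc])
    show "continuous_on {1..M} (\<lambda>\<nu>. g (0, \<nu>))"
      by (rule continuous_on_compose2[OF g_cont]) (auto intro!: continuous_intros)
    \<comment> \<open>all values of \<open>g (0, -)\<close> are logarithms of \<open>\<i>\<close>, so they are \<open>2\<pi>\<close> apart\<close>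
    fix \<nu> assume \<nu>: "\<nu> \<in> {1..M}"
    show "\<exists>e>0. \<forall>y. y \<in> {1..M} \<and> g (0, y) \<noteq> g (0, \<nu>) \<longrightarrow> e \<le> norm (g (0, y) - g (0, \<nu>))"
    proof (intro exI[of _ 1] conjI allI impI)
      fix y assume y: "y \<in> {1..M} \<and> g (0, y) \<noteq> g (0, \<nu>)"
      then have "exp (g (0, y)) = exp (g (0, \<nu>))" using g0 \<nu> by auto
      then obtain n :: int where n: "g (0, y) = g (0, \<nu>) + (of_int (2 * n) * pi) * \<i>"
        unfolding exp_eq by blast
      with y have "1 \<le> \<bar>real_of_int (2 * n)\<bar>" by (auto simp del: of_int_mult)
      then have "1 * 1 \<le> \<bar>real_of_int (2 * n)\<bar> * pi" using pi_gt3 by (intro mult_mono) auto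
      also have "\<dots> = norm (g (0, y) - g (0, \<nu>))" using n by (simp add: norm_mult)
      finally show "1 \<le> norm (g (0, y) - g (0, \<nu>))" by simp
    qed simp
  qed
  then show ?thesis
    using assms M_ge_1 unfolding constant_on_def angle_def by fastforce
qed

lemma continuous_on_angle_pi: "continuous_on {1..M} (angle pi)"
  unfolding angle_def
  by (rule continuous_on_compose2[OF continuous_on_Im[OF g_cont]]) (auto intro!: continuous_intros)

lemma eigenvalue_if_cos_angle_pi:
  assumes \<mu>: "\<mu> \<in> {1..M}" and cos: "cos (angle pi \<mu>) = 0"
  shows "\<mu> \<in> sl_spec r"
proof -
  have "sqrt \<mu> * sol \<mu> pi = Re (exp (g (pi, \<mu>)))"
    using exp_g[of pi \<mu>] \<mu> by (simp add: pruefer_Re[symmetric])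
  also have "\<dots> = 0" using cos by (simp add: Re_exp angle_def)
  finally show ?thesis using \<mu> by (simp add: sl_spec_iff_sol_pi)
qed

end

context sl_weight
begin

lemma pruefer_log_exists: "M \<ge> 1 \<Longrightarrow> \<exists>g. pruefer_log r M g"
proof -
  assume M: "M \<ge> 1"
  have "convex ({0..pi} \<times> {1..M})" by (intro convex_Times convex_real_interval)
  then obtain g where "continuous_on ({0..pi} \<times> {1..M}) g"
    "\<And>p. p \<in> {0..pi} \<times> {1..M} \<Longrightarrow> pruefer (snd p) (fst p) = exp (g p)"
    using continuous_logarithm_on_contractible[OF continuous_on_pruefer[OF M] convex_imp_contractible]
      pruefer_nonzero by (metis mem_Times_iff atLeastAtMost_iff)
  then have "pruefer_log r M g"
    using M by unfold_locales auto
  then show ?thesis by blast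
qed

lemma sl_spec_has_card_subsets: "\<exists>A \<subseteq> sl_spec r. finite A \<and> card A = N"
proof -
  \<comment> \<open>large enough that the angle at \<open>\<pi>\<close> drops by \<open>N \<pi>\<close> between \<open>\<mu> = 1\<close> and \<open>\<mu> = M\<close>\<close>
  define M where "M = (K * (K + real N))\<^sup>2 + 1"
  have M: "M \<ge> 1" by (simp add: M_def)
  have "K * (K + real N) \<le> sqrt M"
    using K_bounds(1) real_sqrt_le_mono[of "(K * (K + real N))\<^sup>2" M] by (simp add: M_def)
  then have sqrt_M: "K + real N \<le> sqrt M / K"
    using K_bounds(1) by (simp add: field_simps)
  obtain g where "pruefer_log r M g" using pruefer_log_exists[OF M] ..
  then interpret pruefer_log r M g .
  have "angle pi M + real N * pi \<le> angle 0 1 - pi * sqrt M / K + real N * pi"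
    using angle_pi_upper[of M] angle_0_constant[of M] M by simp
  also have "\<dots> \<le> angle 0 1 - pi * K"
    using mult_left_mono[OF sqrt_M, of pi] by (simp add: algebra_simps)
  also have "\<dots> \<le> angle pi 1"
    using angle_pi_lower[of 1] M by simp
  finally obtain A where A: "A \<subseteq> {1..M}" "finite A" "card A = N" "\<forall>\<mu>\<in>A. cos (angle pi \<mu>) = 0"
    using cos_zeros_of_decrease[OF M continuous_on_angle_pi] by blast
  then have "A \<subseteq> sl_spec r" using eigenvalue_if_cos_angle_pi by blast
  with A show ?thesis by blast
qed

lemma infinite_sl_spec: "infinite (sl_spec r)"
proof
  assume fin: "finite (sl_spec r)"
  obtain A where A: "A \<subseteq> sl_spec r" "card A = Suc (card (sl_spec r))"
    using sl_spec_has_card_subsets by blast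
  have "card A \<le> card (sl_spec r)" by (rule card_mono[OF fin A(1)])
  with A(2) show False by simp
qed

lemma sl_eig_is_nth_eigenvalue:
  assumes "n \<ge> 1"
  shows "sl_eig r n \<in> sl_spec r" "card {\<nu> \<in> sl_spec r. \<nu> < sl_eig r n} = n - 1"
proof -
  have "finite {\<nu> \<in> sl_spec r. \<nu> \<le> M}" for M
    by (rule finite_sl_spec_le)
  from theI'[OF ex1_rank_element[OF infinite_sl_spec this]]
  show "sl_eig r n \<in> sl_spec r" "card {\<nu> \<in> sl_spec r. \<nu> < sl_eig r n} = n - 1"
    unfolding sl_eig_def by auto
qed

lemma sl_eig_inj: "n \<ge> 1 \<Longrightarrow> m \<ge> 1 \<Longrightarrow> sl_eig r n = sl_eig r m \<Longrightarrow> n = m"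
  using sl_eig_is_nth_eigenvalue[of n] sl_eig_is_nth_eigenvalue[of m] by auto

lemma eigenfun_scale: "sl_eigenfun r \<mu> \<phi> \<Longrightarrow> c \<noteq> 0 \<Longrightarrow> sl_eigenfun r \<mu> (\<lambda>x. c * \<phi> x)"
proof -
  assume e: "sl_eigenfun r \<mu> \<phi>" and c: "c \<noteq> 0"
  obtain \<phi>' where d: "\<forall>x\<in>{0..pi}. (\<phi> has_real_derivative \<phi>' x) (at x within {0..pi}) \<and>
        ((\<lambda>y. r y * \<phi>' y) has_real_derivative (- \<mu> * r x * \<phi> x)) (at x within {0..pi})"
    and b: "\<phi> 0 = 0" "\<phi> pi = 0" and nz: "\<exists>x\<in>{0..pi}. \<phi> x \<noteq> 0"
    using e unfolding sl_eigenfun_def by blast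
  show ?thesis unfolding sl_eigenfun_def
  proof (intro conjI exI[of _ "\<lambda>x. c * \<phi>' x"] ballI)
    fix x :: real assume x: "x \<in> {0..pi}"
    show "((\<lambda>x. c * \<phi> x) has_real_derivative c * \<phi>' x) (at x within {0..pi})"
      using d x by (auto intro!: derivative_eq_intros)
    have "((\<lambda>y. c * (r y * \<phi>' y)) has_real_derivative c * (- \<mu> * r x * \<phi> x)) (at x within {0..pi})"
      using d x by (intro DERIV_cmult) auto
    then show "((\<lambda>y. r y * (c * \<phi>' y)) has_real_derivative - \<mu> * r x * (c * \<phi> x)) (at x within {0..pi})"
      by (simp add: algebra_simps)
  qed (use b nz c in auto)
qed

lemma eigenfun_cont: "sl_eigenfun r \<mu> \<phi> \<Longrightarrow> continuous_on {0..pi} \<phi>"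
  unfolding sl_eigenfun_def
  by (meson DERIV_continuous continuous_on_eq_continuous_within)

lemma eigenfun_norm_pos:
  assumes "sl_eigenfun r \<mu> \<phi>"
  shows "integral {0..pi} (\<lambda>x. r x * (\<phi> x)\<^sup>2) > 0"
proof -
  have c: "continuous_on {0..pi} (\<lambda>x. r x * (\<phi> x)\<^sup>2)"
    using eigenfun_cont[OF assms] by (intro continuous_intros weight_cont)
  obtain x0 where x0: "x0 \<in> {0..pi}" "\<phi> x0 \<noteq> 0" using assms unfolding sl_eigenfun_def by auto
  have nn: "0 \<le> r x * (\<phi> x)\<^sup>2" if "x \<in> {0..pi}" for x using weight_pos[OF that] by auto
  have "0 \<le> integral {0..pi} (\<lambda>x. r x * (\<phi> x)\<^sup>2)"
    by (rule integral_nonneg[OF integrable_continuous_interval[OF c]]) (use nn in auto)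
  moreover have "integral {0..pi} (\<lambda>x. r x * (\<phi> x)\<^sup>2) \<noteq> 0"
  proof
    assume z: "integral {0..pi} (\<lambda>x. r x * (\<phi> x)\<^sup>2) = 0"
    have "((\<lambda>x. r x * (\<phi> x)\<^sup>2) has_integral 0) (cbox 0 pi)"
      using integrable_integral[OF integrable_continuous_interval[OF c]] z by simp
    moreover have "continuous_on (cbox 0 pi) (\<lambda>x. r x * (\<phi> x)\<^sup>2)" using c by (simp only: cbox_interval)
    moreover have "\<And>x. x \<in> box 0 pi \<Longrightarrow> 0 \<le> r x * (\<phi> x)\<^sup>2" using nn by (simp add: box_real)
    moreover have "box 0 pi \<noteq> {}" using pi_gt_zero by (simp add: box_real not_le)
    moreover have "x0 \<in> cbox 0 pi" using x0(1) by (simp only: cbox_interval)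
    ultimately have "r x0 * (\<phi> x0)\<^sup>2 = 0"
      by (intro has_integral_0_cbox_imp_0[of 0 pi "\<lambda>x. r x * (\<phi> x)\<^sup>2" x0])
    then show False using weight_pos[OF x0(1)] x0(2) by simp
  qed
  ultimately show ?thesis by simp
qed

lemma sl_efun_normalized:
  assumes n: "n \<ge> 1"
  shows "sl_eigenfun r (sl_eig r n) (sl_efun r n)"
    "integral {0..pi} (\<lambda>x. r x * (sl_efun r n x)\<^sup>2) = 1"
proof -
  obtain \<phi> where e: "sl_eigenfun r (sl_eig r n) \<phi>"
    using sl_eig_is_nth_eigenvalue(1)[OF n] unfolding sl_spec_def by auto
  define I where "I = integral {0..pi} (\<lambda>x. r x * (\<phi> x)\<^sup>2)"
  have I: "I > 0" unfolding I_def by (rule eigenfun_norm_pos[OF e])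
  define \<psi> where "\<psi> x = (1 / sqrt I) * \<phi> x" for x
  have e2: "sl_eigenfun r (sl_eig r n) \<psi>" unfolding \<psi>_def by (rule eigenfun_scale[OF e]) (use I in auto)
  have pt: "r x * (\<psi> x)\<^sup>2 = (1 / I) * (r x * (\<phi> x)\<^sup>2)" for x
  proof -
    have "(1 / sqrt I)\<^sup>2 = 1 / I" using I by (simp add: power_divide)
    then show ?thesis unfolding \<psi>_def power_mult_distrib by simp
  qed
  have "integral {0..pi} (\<lambda>x. r x * (\<psi> x)\<^sup>2) = integral {0..pi} (\<lambda>x. (1 / I) * (r x * (\<phi> x)\<^sup>2))"
    by (simp only: pt)
  also have "\<dots> = (1 / I) * I" unfolding I_def by (rule integral_mult_right)
  also have "\<dots> = 1" using I by simp
  finally have "\<exists>\<psi>. sl_eigenfun r (sl_eig r n) \<psi> \<and> integral {0..pi} (\<lambda>x. r x * (\<psi> x)\<^sup>2) = 1"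
    using e2 by blast
  from someI_ex[OF this] show "sl_eigenfun r (sl_eig r n) (sl_efun r n)"
    "integral {0..pi} (\<lambda>x. r x * (sl_efun r n x)\<^sup>2) = 1" unfolding sl_efun_def by auto
qed

lemma eigenfun_orthogonal:
  assumes e1: "sl_eigenfun r \<mu> \<phi>" and e2: "sl_eigenfun r \<nu> \<psi>" and ne: "\<mu> \<noteq> \<nu>"
  shows "((\<lambda>x. r x * \<phi> x * \<psi> x) has_integral 0) {0..pi}"
proof -
  obtain \<phi>' where d1: "\<And>x. x \<in> {0..pi} \<Longrightarrow> (\<phi> has_real_derivative \<phi>' x) (at x within {0..pi}) \<and>
        ((\<lambda>y. r y * \<phi>' y) has_real_derivative (- \<mu> * r x * \<phi> x)) (at x within {0..pi})"
    and b1: "\<phi> 0 = 0" "\<phi> pi = 0"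
    using e1 unfolding sl_eigenfun_def by blast
  obtain \<psi>' where d2: "\<And>x. x \<in> {0..pi} \<Longrightarrow> (\<psi> has_real_derivative \<psi>' x) (at x within {0..pi}) \<and>
        ((\<lambda>y. r y * \<psi>' y) has_real_derivative (- \<nu> * r x * \<psi> x)) (at x within {0..pi})"
    and b2: "\<psi> 0 = 0" "\<psi> pi = 0"
    using e2 unfolding sl_eigenfun_def by blast
  define wronskian where "wronskian y = (r y * \<phi>' y) * \<psi> y - \<phi> y * (r y * \<psi>' y)" for y
  have dF: "(wronskian has_vector_derivative ((\<nu> - \<mu>) * (r x * \<phi> x * \<psi> x))) (at x within {0..pi})"
    if x: "x \<in> {0..pi}" for x
  proof -
    have "(wronskian has_real_derivative (r x * \<phi>' x * \<psi>' x + (- \<mu> * r x * \<phi> x) * \<psi> x)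
        - (\<phi> x * (- \<nu> * r x * \<psi> x) + \<phi>' x * (r x * \<psi>' x))) (at x within {0..pi})"
      unfolding wronskian_def[abs_def]
      by (rule DERIV_diff[OF DERIV_mult'[OF conjunct2[OF d1[OF x]] conjunct1[OF d2[OF x]]]
          DERIV_mult'[OF conjunct1[OF d1[OF x]] conjunct2[OF d2[OF x]]]])
    moreover have "(r x * \<phi>' x * \<psi>' x + (- \<mu> * r x * \<phi> x) * \<psi> x)
        - (\<phi> x * (- \<nu> * r x * \<psi> x) + \<phi>' x * (r x * \<psi>' x)) = (\<nu> - \<mu>) * (r x * \<phi> x * \<psi> x)"
      by (simp add: algebra_simps)
    ultimately show ?thesis by (simp add: has_real_derivative_iff_has_vector_derivative)
  qed
  have "((\<lambda>x. (\<nu> - \<mu>) * (r x * \<phi> x * \<psi> x)) has_integral wronskian pi - wronskian 0) {0..pi}"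
    using dF by (intro fundamental_theorem_of_calculus) auto
  then have "((\<lambda>x. (\<nu> - \<mu>) * (r x * \<phi> x * \<psi> x)) has_integral 0) {0..pi}"
    by (simp add: wronskian_def b1 b2)
  from has_integral_mult_right[OF this, of "1 / (\<nu> - \<mu>)"]
  have "((\<lambda>x. (1 / (\<nu> - \<mu>)) * ((\<nu> - \<mu>) * (r x * \<phi> x * \<psi> x))) has_integral 0) {0..pi}" by simp
  then show ?thesis using ne by simp
qed

end

section \<open>Fourier coefficients\<close>

context sl_weight
begin

definition coef_kernel :: "real \<Rightarrow> nat \<Rightarrow> int \<Rightarrow> real \<times> real \<Rightarrow> complex" where
  "coef_kernel T n m z = cnj (basis r T n m z) * complex_of_real (r (snd z))"

lemma coef_eq_kernel_integral: "coef r T u n m = (LINT z:Omega T|lebesgue. u z * coef_kernel T n m z)"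
  unfolding coef_def coef_kernel_def basis_def by (simp add: mult_ac)

lemma continuous_on_sl_efun: "n \<ge> 1 \<Longrightarrow> continuous_on {0..pi} (sl_efun r n)"
  using eigenfun_cont sl_efun_normalized by blast

lemma continuous_on_basis: "n \<ge> 1 \<Longrightarrow> continuous_on (cbox (0,0) (T,pi)) (basis r T n m)"
  unfolding basis_def[abs_def]
  by (intro continuous_intros continuous_on_cbox_snd continuous_on_sl_efun
      continuous_on_cbox_fst continuous_on_tfun)

lemma continuous_on_coef_kernel: "n \<ge> 1 \<Longrightarrow> continuous_on (cbox (0,0) (T,pi)) (coef_kernel T n m)"
  unfolding coef_kernel_def[abs_def]
  by (intro continuous_intros continuous_on_basis continuous_on_cbox_snd weight_cont)

lemma sl_efun_orthonormal:
  assumes n: "n \<ge> 1" "n' \<ge> 1"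
  shows "((\<lambda>x. sl_efun r n' x * sl_efun r n x * r x) has_integral (if n' = n then 1 else 0)) {0..pi}"
proof (cases "n' = n")
  case True
  have "continuous_on {0..pi} (\<lambda>x. r x * (sl_efun r n x)\<^sup>2)"
    by (intro continuous_intros weight_cont continuous_on_sl_efun n)
  then have "((\<lambda>x. r x * (sl_efun r n x)\<^sup>2) has_integral 1) {0..pi}"
    using integrable_integral[OF integrable_continuous_interval] sl_efun_normalized(2)[OF n(1)] by metis
  then show ?thesis using True by (simp add: power2_eq_square mult_ac)
next
  case False
  then have "sl_eig r n' \<noteq> sl_eig r n" using sl_eig_inj n by blast
  from eigenfun_orthogonal[OF sl_efun_normalized(1)[OF n(2)] sl_efun_normalized(1)[OF n(1)] this]
  show ?thesis using False by (simp add: mult_ac)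
qed

lemma coef_basis:
  assumes T: "T > 0" and n: "n \<ge> 1" "n' \<ge> 1"
  shows "coef r T (basis r T n' m') n m = (if n' = n \<and> m' = m then 1 else 0)"
proof -
  define f where "f t = tfun T m' t * cnj (tfun T m t)" for t
  define g where "g x = complex_of_real (sl_efun r n' x * sl_efun r n x * r x)" for x
  have fc: "continuous_on {0..T} f" unfolding f_def by (intro continuous_intros continuous_on_tfun)
  have gc: "continuous_on {0..pi} g" unfolding g_def
    by (intro continuous_intros weight_cont continuous_on_sl_efun n)
  have "(g has_integral of_real (if n' = n then 1 else 0)) {0..pi}"
    unfolding g_def by (rule has_integral_of_real[OF sl_efun_orthonormal[OF n]])
  then have g_int: "integral {0..pi} g = (if n' = n then 1 else 0)"
    by (simp add: integral_unique)
  have "coef r T (basis r T n' m') n m = (LINT z:Omega T|lebesgue. f (fst z) * g (snd z))"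
    unfolding coef_def basis_def f_def g_def by (simp add: mult_ac)
  also have "\<dots> = integral {0..T} f * integral {0..pi} g"
    by (simp add: set_integral_Omega_continuous integral_cbox_product fc gc continuous_intros
        continuous_on_cbox_fst continuous_on_cbox_snd)
  also have "integral {0..T} f = (if m' = m then 1 else 0)"
    unfolding f_def by (rule integral_tfun_mult_cnj[OF T])
  finally show ?thesis by (auto simp: g_int)
qed

lemma set_integrable_L2w_mult_continuous:
  assumes u: "u \<in> L2w r T" and B: "continuous_on (cbox (0,0) (T,pi)) B"
  shows "set_integrable lebesgue (Omega T) (\<lambda>z. u z * B z)"
proof -
  have mu: "(\<lambda>z. indicator (Omega T) z *\<^sub>R u z) \<in> borel_measurable lebesgue"
    and iu: "set_integrable lebesgue (Omega T) (\<lambda>z. (cmod (u z))\<^sup>2 * r (snd z))"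
    using u unfolding L2w_def by auto
  have "bounded (B ` cbox (0,0) (T,pi))"
    by (intro compact_imp_bounded compact_continuous_image B compact_cbox)
  then obtain C where C: "C > 0" "\<And>z. z \<in> cbox (0,0) (T,pi) \<Longrightarrow> norm (B z) \<le> C"
    unfolding bounded_pos by auto
  \<comment> \<open>\<open>|u B| \<le> C (1 + |u|\<^sup>2) \<le> C (1 + K |u|\<^sup>2 r)\<close>, and \<open>\<Omega>\<close> has finite measure\<close>
  define f where "f z = C * (1 + K * ((cmod (u z))\<^sup>2 * r (snd z)))" for z
  have "set_integrable lebesgue (Omega T) (\<lambda>z. 1::real)"
    by (rule set_integrable_Omega_continuous[OF continuous_on_const])
  then have fi: "set_integrable lebesgue (Omega T) f"
    unfolding f_def by (intro set_integrable_mult_right set_integral_add(1) iu)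
  have "(\<lambda>z. indicator (Omega T) z *\<^sub>R (u z * B z))
      = (\<lambda>z. (indicator (Omega T) z *\<^sub>R u z) * (indicator (Omega T) z *\<^sub>R B z))"
    by (auto simp: indicator_def)
  then have gm: "set_borel_measurable lebesgue (Omega T) (\<lambda>z. u z * B z)"
    unfolding set_borel_measurable_def
    using borel_measurable_times[OF mu measurable_Omega_continuous[OF B]] by simp
  show ?thesis
  proof (rule set_integrable_bound[OF fi gm AE_I2], intro impI)
    fix z assume z: "z \<in> Omega T"
    then have zb: "z \<in> cbox (0,0) (T,pi)" and zs: "snd z \<in> {0..pi}"
      using Omega_subset_cbox unfolding Omega_def by auto
    have "1 \<le> K * r (snd z)"
      using weight_pos[OF zs] K_bounds(3)[OF zs] by (simp add: field_simps)
    then have "(cmod (u z))\<^sup>2 \<le> K * ((cmod (u z))\<^sup>2 * r (snd z))"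
      using mult_left_mono[of 1 "K * r (snd z)" "(cmod (u z))\<^sup>2"] by (simp add: algebra_simps)
    moreover have "2 * cmod (u z) \<le> 1 + (cmod (u z))\<^sup>2"
      using sum_squares_bound[of 1 "cmod (u z)"] by simp
    moreover have "0 \<le> cmod (u z)" by simp
    ultimately have "cmod (u z) \<le> 1 + K * ((cmod (u z))\<^sup>2 * r (snd z))" by linarith
    then have "cmod (u z) * norm (B z) \<le> (1 + K * ((cmod (u z))\<^sup>2 * r (snd z))) * C"
      using C(2)[OF zb] by (intro mult_mono) (auto intro: order_trans[OF norm_ge_zero])
    then show "norm (u z * B z) \<le> norm (f z)" by (simp add: f_def norm_mult mult.commute)
  qed
qed

lemma coef_add:
  assumes "set_integrable lebesgue (Omega T) (\<lambda>z. u z * coef_kernel T n m z)"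
    and "set_integrable lebesgue (Omega T) (\<lambda>z. v z * coef_kernel T n m z)"
  shows "coef r T (\<lambda>z. u z + v z) n m = coef r T u n m + coef r T v n m"
  unfolding coef_eq_kernel_integral using set_integral_add(2)[OF assms] by (simp add: algebra_simps)

lemma coef_diff:
  assumes "set_integrable lebesgue (Omega T) (\<lambda>z. u z * coef_kernel T n m z)"
    and "set_integrable lebesgue (Omega T) (\<lambda>z. v z * coef_kernel T n m z)"
  shows "coef r T (\<lambda>z. u z - v z) n m = coef r T u n m - coef r T v n m"
  unfolding coef_eq_kernel_integral using set_integral_diff(2)[OF assms] by (simp add: algebra_simps)

lemma coef_basis_comb:
  assumes T: "T > 0" and F: "finite F" "F \<subseteq> Idx" and nm: "(n, m) \<in> Idx"
  shows "set_integrable lebesgue (Omega T)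
      (\<lambda>z. (\<Sum>k\<in>F. c k * basis r T (fst k) (snd k) z) * coef_kernel T n m z)"
    and "coef r T (\<lambda>z. \<Sum>k\<in>F. c k * basis r T (fst k) (snd k) z) n m = (if (n, m) \<in> F then c (n, m) else 0)"
proof -
  have n: "n \<ge> 1" and k: "\<And>k. k \<in> F \<Longrightarrow> fst k \<ge> 1" using nm F(2) by (auto simp: Idx_def)
  have split: "(\<lambda>z. (\<Sum>k\<in>F. c k * basis r T (fst k) (snd k) z) * coef_kernel T n m z)
      = (\<lambda>z. \<Sum>k\<in>F. c k * (basis r T (fst k) (snd k) z * coef_kernel T n m z))"
    by (simp add: sum_distrib_right mult.assoc)
  have "set_integrable lebesgue (Omega T) (\<lambda>z. c k * (basis r T (fst k) (snd k) z * coef_kernel T n m z))"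
    if "k \<in> F" for k
    using k[OF that] n by (intro set_integrable_mult_right set_integrable_Omega_continuous
        continuous_intros continuous_on_basis continuous_on_coef_kernel)
  note sum = set_integral_sum[OF F(1) this]
  show "set_integrable lebesgue (Omega T)
      (\<lambda>z. (\<Sum>k\<in>F. c k * basis r T (fst k) (snd k) z) * coef_kernel T n m z)"
    unfolding split by (rule sum(1))
  have "coef r T (\<lambda>z. \<Sum>k\<in>F. c k * basis r T (fst k) (snd k) z) n m
      = (\<Sum>k\<in>F. c k * coef r T (basis r T (fst k) (snd k)) n m)"
    unfolding coef_eq_kernel_integral split using sum(2) by simp
  also have "\<dots> = (\<Sum>k\<in>F. if k = (n, m) then c k else 0)"
    by (rule sum.cong[OF refl]) (auto simp: coef_basis[OF T n k])
  also have "\<dots> = (if (n, m) \<in> F then c (n, m) else 0)" using F(1) by (simp add: sum.delta')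
  finally show "coef r T (\<lambda>z. \<Sum>k\<in>F. c k * basis r T (fst k) (snd k) z) n m
      = (if (n, m) \<in> F then c (n, m) else 0)" .
qed

lemma integral_mult_cnj_basis_comb:
  assumes F: "finite F"
    and int: "\<And>k. k \<in> F \<Longrightarrow> set_integrable lebesgue (Omega T) (\<lambda>z. u z * coef_kernel T (fst k) (snd k) z)"
  shows "(LINT z:Omega T|lebesgue. u z * (cnj (\<Sum>k\<in>F. c k * basis r T (fst k) (snd k) z) * r (snd z)))
    = (\<Sum>k\<in>F. cnj (c k) * coef r T u (fst k) (snd k))"
proof -
  have "(\<lambda>z. u z * (cnj (\<Sum>k\<in>F. c k * basis r T (fst k) (snd k) z) * r (snd z)))
      = (\<lambda>z. \<Sum>k\<in>F. cnj (c k) * (u z * coef_kernel T (fst k) (snd k) z))"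
    by (simp add: coef_kernel_def sum_distrib_left sum_distrib_right mult_ac)
  then show ?thesis
    using set_integral_sum(2)[OF F, where f="\<lambda>k z. cnj (c k) * (u z * coef_kernel T (fst k) (snd k) z)"] int
    by (simp add: coef_eq_kernel_integral)
qed

lemma set_integral_weighted_square_nonneg:
  "0 \<le> (LINT z:Omega T|lebesgue. (cmod (f z))\<^sup>2 * r (snd z))"
  unfolding set_lebesgue_integral_def
  by (rule Bochner_Integration.integral_nonneg)
    (auto simp: indicator_def Omega_def intro!: mult_nonneg_nonneg less_imp_le[OF weight_pos])

lemma set_integral_weighted_square_diff:
  assumes u: "u \<in> L2w r T" and s_cont: "continuous_on (cbox (0,0) (T,pi)) s"
  defines "w \<equiv> \<lambda>z. cnj (s z) * complex_of_real (r (snd z))"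
  shows "(LINT z:Omega T|lebesgue. (cmod (u z - s z))\<^sup>2 * r (snd z))
    = (LINT z:Omega T|lebesgue. (cmod (u z))\<^sup>2 * r (snd z))
      - 2 * Re (LINT z:Omega T|lebesgue. u z * w z) + Re (LINT z:Omega T|lebesgue. s z * w z)"
proof -
  have w_cont: "continuous_on (cbox (0,0) (T,pi)) w"
    unfolding w_def by (intro continuous_intros s_cont continuous_on_cbox_snd weight_cont)
  have iu: "set_integrable lebesgue (Omega T) (\<lambda>z. (cmod (u z))\<^sup>2 * r (snd z))"
    using u unfolding L2w_def by auto
  have iuw: "set_integrable lebesgue (Omega T) (\<lambda>z. u z * w z)"
    by (rule set_integrable_L2w_mult_continuous[OF u w_cont])
  have isw: "set_integrable lebesgue (Omega T) (\<lambda>z. s z * w z)"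
    by (intro set_integrable_Omega_continuous continuous_intros s_cont w_cont)
  have i1: "set_integrable lebesgue (Omega T) (\<lambda>z. 2 * Re (u z * w z))"
    by (intro set_integrable_mult_right set_integrable_Re iuw)
  have i2: "set_integrable lebesgue (Omega T) (\<lambda>z. Re (s z * w z))"
    by (intro set_integrable_Re isw)
  have "(cmod (u z - s z))\<^sup>2 * r (snd z)
      = (cmod (u z))\<^sup>2 * r (snd z) - 2 * Re (u z * w z) + Re (s z * w z)" for z
    unfolding w_def cmod_power2 by (simp add: power2_eq_square algebra_simps)
  then have "(LINT z:Omega T|lebesgue. (cmod (u z - s z))\<^sup>2 * r (snd z))
      = (LINT z:Omega T|lebesgue. (cmod (u z))\<^sup>2 * r (snd z) - 2 * Re (u z * w z) + Re (s z * w z))"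
    by simp
  also have "\<dots> = (LINT z:Omega T|lebesgue. (cmod (u z))\<^sup>2 * r (snd z))
      - (LINT z:Omega T|lebesgue. 2 * Re (u z * w z)) + (LINT z:Omega T|lebesgue. Re (s z * w z))"
    using set_integral_diff(2)[OF iu i1] set_integral_add(2)[OF set_integral_diff(1)[OF iu i1] i2]
    by simp
  finally show ?thesis
    by (simp only: set_integral_mult_right set_integral_Re[OF iuw] set_integral_Re[OF isw])
qed

lemma bessel_inequality:
  assumes T: "T > 0" and u: "u \<in> L2w r T" and F: "finite F" "F \<subseteq> Idx"
  shows "(\<Sum>k\<in>F. (cmod (coef r T u (fst k) (snd k)))\<^sup>2) \<le> (LINT z:Omega T|lebesgue. (cmod (u z))\<^sup>2 * r (snd z))"
proof -
  define c where "c k = coef r T u (fst k) (snd k)" for k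
  define s where "s z = (\<Sum>k\<in>F. c k * basis r T (fst k) (snd k) z)" for z
  define S where "S = (\<Sum>k\<in>F. (cmod (c k))\<^sup>2)"
  have k: "fst k \<ge> 1" "(fst k, snd k) \<in> Idx" if "k \<in> F" for k
    using F(2) that by (auto simp: Idx_def)
  have s_cont: "continuous_on (cbox (0,0) (T,pi)) s"
    unfolding s_def using k by (intro continuous_intros continuous_on_basis) auto
  have cnj_c: "(\<Sum>k\<in>F. cnj (c k) * c k) = complex_of_real S"
  proof -
    have "cnj (c k) * c k = complex_of_real ((cmod (c k))\<^sup>2)" for k
      by (metis complex_norm_square mult.commute)
    then show ?thesis unfolding S_def by simp
  qed
  have "(LINT z:Omega T|lebesgue. u z * (cnj (s z) * r (snd z))) = (\<Sum>k\<in>F. cnj (c k) * c k)"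
    unfolding s_def c_def
    by (rule integral_mult_cnj_basis_comb[OF F(1) set_integrable_L2w_mult_continuous[OF u]])
      (use k(1) in \<open>auto intro!: continuous_on_coef_kernel\<close>)
  moreover have "(LINT z:Omega T|lebesgue. s z * (cnj (s z) * r (snd z)))
      = (\<Sum>k\<in>F. cnj (c k) * coef r T s (fst k) (snd k))"
    unfolding s_def
    by (rule integral_mult_cnj_basis_comb[OF F(1) coef_basis_comb(1)[OF T F k(2)]])
  moreover have "\<dots> = (\<Sum>k\<in>F. cnj (c k) * c k)"
    unfolding s_def using coef_basis_comb(2)[OF T F k(2)] by simp
  ultimately have "(LINT z:Omega T|lebesgue. (cmod (u z - s z))\<^sup>2 * r (snd z))
      = (LINT z:Omega T|lebesgue. (cmod (u z))\<^sup>2 * r (snd z)) - S"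
    using set_integral_weighted_square_diff[OF u s_cont] cnj_c by simp
  moreover have "0 \<le> (LINT z:Omega T|lebesgue. (cmod (u z - s z))\<^sup>2 * r (snd z))"
    by (rule set_integral_weighted_square_nonneg)
  ultimately show ?thesis unfolding S_def c_def by simp
qed

lemma summable_coef_squared:
  assumes "T > 0" and "u \<in> L2w r T"
  shows "(\<lambda>(n, m). (cmod (coef r T u n m))\<^sup>2) summable_on Idx"
proof (rule nonneg_bdd_above_summable_on)
  show "bdd_above (sum (\<lambda>(n, m). (cmod (coef r T u n m))\<^sup>2) ` {F. F \<subseteq> Idx \<and> finite F})"
    using bessel_inequality[OF assms]
    by (intro bdd_aboveI2[where M="LINT z:Omega T|lebesgue. (cmod (u z))\<^sup>2 * r (snd z)"])
      (auto simp: case_prod_unfold)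
qed auto

lemma Espan_coef_eq_0:
  assumes T: "T > 0" and a: "a \<notin> specL r T" and u: "u \<in> Espan r T a S" and S: "S \<subseteq> Idx"
    and j: "(n0, m0) \<in> Idx" "(n0, m0) \<notin> S"
  shows "coef r T u n0 m0 = 0"
proof (rule ccontr)
  assume nz: "coef r T u n0 m0 \<noteq> 0"
  define f where "f = (\<lambda>(n, m). \<bar>lam r T n m - a\<bar> * (cmod (coef r T u n m))\<^sup>2)"
  have uL: "u \<in> L2w r T" and f_sum: "f summable_on Idx"
    using u unfolding Espan_def Espace_def f_def by auto
  \<comment> \<open>the weight \<open>|\<lambda>\<^sub>n\<^sub>m - a|\<close> is positive because \<open>a \<notin> \<Lambda>(L)\<close>\<close>
  have "lam r T n0 m0 \<noteq> a" using j(1) a unfolding specL_def Idx_def by auto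
  then have eps: "f (n0, m0) > 0" using nz by (simp add: f_def)
  then obtain F c where F: "finite F" "F \<subseteq> S"
    and small: "Enorm2 r T a (\<lambda>z. u z - (\<Sum>k\<in>F. c k * basis r T (fst k) (snd k) z)) < f (n0, m0)"
    using u unfolding Espan_def by blast
  define s where "s = (\<lambda>z. \<Sum>k\<in>F. c k * basis r T (fst k) (snd k) z)"
  define g where "g = (\<lambda>(n, m). \<bar>lam r T n m - a\<bar> * (cmod (coef r T (\<lambda>z. u z - s z) n m))\<^sup>2)"
  have FI: "F \<subseteq> Idx" using F S by auto
  have "coef r T (\<lambda>z. u z - s z) n m = coef r T u n m" if nm: "(n, m) \<in> Idx - F" for n m
  proof -
    have "n \<ge> 1" using nm by (auto simp: Idx_def)
    then have "coef r T (\<lambda>z. u z - s z) n m = coef r T u n m - coef r T s n m"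
      unfolding s_def
      by (intro coef_diff set_integrable_L2w_mult_continuous[OF uL] continuous_on_coef_kernel
          coef_basis_comb(1)[OF T F(1) FI]) (use nm in auto)
    then show ?thesis using coef_basis_comb(2)[OF T F(1) FI, of n m c] nm by (simp add: s_def)
  qed
  then have g_eq: "g x = f x" if "x \<in> Idx - F" for x
    using that by (auto simp: g_def f_def split: prod.splits)
  have "(n0, m0) \<notin> F" using j F by auto
  then have "f (n0, m0) = sum g {(n0, m0)}" using g_eq j by simp
  also have "\<dots> \<le> infsum g Idx"
    by (rule finite_sum_le_infsum[OF summable_on_eq_off_finite[OF f_sum F(1) g_eq]])
      (use j in \<open>auto simp: g_def\<close>)
  also have "\<dots> < f (n0, m0)"
    using small unfolding Enorm2_def g_def s_def .
  finally show False by simp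
qed

lemma coef_add_L2w:
  assumes "v \<in> L2w r T" "w \<in> L2w r T" "(n, m) \<in> Idx"
  shows "coef r T (\<lambda>z. v z + w z) n m = coef r T v n m + coef r T w n m"
  using assms
  by (intro coef_add set_integrable_L2w_mult_continuous continuous_on_coef_kernel) (auto simp: Idx_def)

lemma summable_coef_add:
  assumes T: "T > 0" and v: "v \<in> Espace r T a" and w: "w \<in> Espace r T a"
  defines "c \<equiv> \<lambda>f i. (cmod (coef r T f (fst i) (snd i)))\<^sup>2"
  shows "(\<lambda>i. \<bar>lam r T (fst i) (snd i) - a\<bar> * c (\<lambda>z. v z + w z) i) summable_on Idx"
    and "c (\<lambda>z. v z + w z) summable_on Idx"
proof -
  define l where "l = (\<lambda>i. lam r T (fst i) (snd i))"
  have vL: "v \<in> L2w r T" and wL: "w \<in> L2w r T" using v w unfolding Espace_def by auto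
  have c_nonneg: "0 \<le> c f i" for f i
    unfolding c_def by simp
  have c_le: "c (\<lambda>z. v z + w z) i \<le> 2 * c v i + 2 * c w i" if "i \<in> Idx" for i
    using coef_add_L2w[OF vL wL, of "fst i" "snd i"] that cmod_add_squared_le by (simp add: c_def)
  have dominant_summable:
    "(\<lambda>i. 2 * (\<bar>l i - a\<bar> * c v i) + 2 * (\<bar>l i - a\<bar> * c w i)) summable_on Idx"
    using v w unfolding Espace_def l_def c_def case_prod_unfold
    by (intro summable_on_add summable_on_cmult_right) auto
  have dominated: "\<bar>l i - a\<bar> * c (\<lambda>z. v z + w z) i \<le> 2 * (\<bar>l i - a\<bar> * c v i) + 2 * (\<bar>l i - a\<bar> * c w i)"
    if "i \<in> Idx" for i
  proof -
    have "\<bar>l i - a\<bar> * c (\<lambda>z. v z + w z) i \<le> \<bar>l i - a\<bar> * (2 * c v i + 2 * c w i)"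
      by (intro mult_left_mono c_le[OF that]) simp
    then show ?thesis by (simp add: algebra_simps)
  qed
  have "(\<lambda>i. \<bar>l i - a\<bar> * c (\<lambda>z. v z + w z) i) summable_on Idx"
    by (rule summable_on_comparison_test[OF dominant_summable dominated])
      (auto intro: mult_nonneg_nonneg c_nonneg)
  then show "(\<lambda>i. \<bar>lam r T (fst i) (snd i) - a\<bar> * c (\<lambda>z. v z + w z) i) summable_on Idx"
    by (simp add: l_def)
  have "(\<lambda>i. 2 * c v i + 2 * c w i) summable_on Idx"
    using summable_coef_squared[OF T vL] summable_coef_squared[OF T wL]
    unfolding c_def case_prod_unfold by (intro summable_on_add summable_on_cmult_right)
  then show "c (\<lambda>z. v z + w z) summable_on Idx"
    by (rule summable_on_comparison_test[OF _ c_le]) (simp_all add: c_nonneg)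
qed

lemma Lform_le_on_Esum_E1_E2:
  assumes T: "T > 0" and a: "a > 0" "a \<notin> specL r T" and b: "b > 0"
    and u: "u \<in> Esum (E1 r T a) (E2 r T a b)"
  shows "Lform r T a b u \<le> - min 1 (a / b) * Enorm2 r T a u"
proof -
  obtain v w where u_eq: "u = (\<lambda>z. v z + w z)" and v: "v \<in> E1 r T a" and w: "w \<in> E2 r T a b"
    using u unfolding Esum_def by blast
  have vE: "v \<in> Espace r T a" and wE: "w \<in> Espace r T a"
    using v w unfolding E1_def E2_def Espan_def by auto
  define l where "l = (\<lambda>i. lam r T (fst i) (snd i))"
  define c where "c = (\<lambda>i. (cmod (coef r T u (fst i) (snd i)))\<^sup>2)"
  have support: "l i < a \<or> (a < l i \<and> l i < b)" if i: "i \<in> Idx" and nz: "c i \<noteq> 0" for i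
  proof (rule ccontr)
    assume out: "\<not> ?thesis"
    have "coef r T v (fst i) (snd i) = 0"
      by (rule Espan_coef_eq_0[OF T a(2) v[unfolded E1_def]]) (use i out in \<open>auto simp: l_def\<close>)
    moreover have "coef r T w (fst i) (snd i) = 0"
      by (rule Espan_coef_eq_0[OF T a(2) w[unfolded E2_def]]) (use i out in \<open>auto simp: l_def\<close>)
    ultimately show False
      using coef_add_L2w[of v T w "fst i" "snd i"] vE wE i nz by (simp add: Espace_def c_def u_eq)
  qed
  have sum_E: "(\<lambda>i. \<bar>l i - a\<bar> * c i) summable_on Idx" and sum_c: "c summable_on Idx"
    using summable_coef_add[OF T vE wE] by (simp_all add: l_def c_def u_eq)
  from infsum_shifted_form_le_neg[OF a(1) b sum_E sum_c _ support]
  show ?thesis unfolding Lform_def Enorm2_def case_prod_unfold l_def c_def by simp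
qed

lemma Lform_ge_on_E3:
  assumes T: "T > 0" and a: "a \<notin> specL r T" and b: "b > 0" and gap: "a < bplus r T b - b"
    and u: "u \<in> E3 r T a b"
  shows "(bplus r T b - a - b) / (bplus r T b - a) * Enorm2 r T a u \<le> Lform r T a b u"
proof -
  define l where "l = (\<lambda>i. lam r T (fst i) (snd i))"
  define c where "c = (\<lambda>i. (cmod (coef r T u (fst i) (snd i)))\<^sup>2)"
  have sum_E: "(\<lambda>i. \<bar>l i - a\<bar> * c i) summable_on Idx"
    using u unfolding E3_def Espan_def Espace_def l_def c_def case_prod_unfold by auto
  have support: "bplus r T b \<le> l i" if i: "i \<in> Idx" and nz: "c i \<noteq> 0" for i
  proof -
    have "l i > b"
    proof (rule ccontr)
      assume "\<not> l i > b"
      then have "coef r T u (fst i) (snd i) = 0"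
        by (intro Espan_coef_eq_0[OF T a u[unfolded E3_def]]) (use i in \<open>auto simp: l_def\<close>)
      with nz show False by (simp add: c_def)
    qed
    moreover have "l i \<in> specL r T" using i unfolding specL_def Idx_def l_def by auto
    ultimately show ?thesis
      unfolding bplus_def by (intro cInf_lower) (auto intro: bdd_belowI[of _ b])
  qed
  from infsum_shifted_form_ge_pos[OF b gap sum_E _ support]
  show ?thesis unfolding Lform_def Enorm2_def case_prod_unfold l_def c_def by simp
qed

end

theorem lemma4p1:
  fixes p q :: nat and rho rho' rho'' :: "real \<Rightarrow> real" and a b :: real
  defines "T \<equiv> Tper p q"
  assumes pq: "p > 0" "q > 0" "coprime p q"
    and rho_pos: "\<forall>x\<in>{0..pi}. rho x > 0"
    and rho_d1: "\<forall>x\<in>{0..pi}. (rho has_real_derivative rho' x) (at x within {0..pi})"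
    and rho_d1_cont: "continuous_on {0..pi} rho'"
    and rho_d2_meas: "set_borel_measurable lebesgue {0..pi} rho''"
    and rho_d2_L2: "set_integrable lebesgue {0..pi} (\<lambda>x. (rho'' x)\<^sup>2)"
    and rho_d2: "\<forall>x\<in>{0..pi}. rho' x = rho' 0 + set_lebesgue_integral lebesgue {0..x} rho''"
    and rho0_pos: "\<exists>c>0. AE x in lebesgue. x \<in> {0<..<pi} \<longrightarrow> eta rho rho' rho'' x \<ge> c"
    and ab_pos: "a > 0" "b > 0"
    and ab_notin: "a \<notin> specL rho T" "b \<notin> specL rho T"
    and a_lower: "2 / pi * set_lebesgue_integral lebesgue {0..pi} (eta rho rho' rho'') < a"
    and a_upper: "a < bplus rho T b - b"
    and ab_meet: "{a<..<b} \<inter> specL rho T \<noteq> {}"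
  shows "\<exists>\<gamma>1>0. \<exists>\<gamma>2>0.
           (\<forall>u\<in>Esum (E1 rho T a) (E2 rho T a b). Lform rho T a b u \<le> - \<gamma>1 * Enorm2 rho T a u) \<and>
           (\<forall>u\<in>E3 rho T a b. Lform rho T a b u \<ge> \<gamma>2 * Enorm2 rho T a u)"
proof -
  \<comment> \<open>of (A1) only continuity and positivity of \<open>\<rho>\<close> are needed\<close>
  have T: "T > 0" unfolding T_def Tper_def using pq by simp
  have "continuous_on {0..pi} rho"
    using rho_d1 by (meson DERIV_continuous continuous_on_eq_continuous_within)
  then interpret sl_weight rho using rho_pos by unfold_locales auto
  have "bplus rho T b - a - b > 0" "bplus rho T b - a > 0" using a_upper ab_pos by auto
  then have "(bplus rho T b - a - b) / (bplus rho T b - a) > 0" by simp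
  moreover have "min 1 (a / b) > 0" using ab_pos by simp
  ultimately show ?thesis
    using Lform_le_on_Esum_E1_E2[OF T ab_pos(1) ab_notin(1) ab_pos(2)]
      Lform_ge_on_E3[OF T ab_notin(1) ab_pos(2) a_upper]
    by blast
qed

end
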